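(* Let $0\le d\le 1$. There exists a quantum algorithm using $\tilde{O}(n^{1-d}\sqrt{m})$ queries that partitions $V$ into two sets $V^{d}_h$ and $V^{d}_l$ such that, with high probability, $V^{d}_h\subseteq \mathcal{V}^{d}_h$ and $V^{d}_l\subseteq \mathcal{V}^{d}_l$, where $\mathcal{V}^{d}_h = \{v \in V \mid \deg(v) \ge \frac{9}{10} n^{d}\}$ and $\mathcal{V}^{d}_l = \{v \in V \mid \deg(v) \leq \frac{11}{10} n^{d}\}$.
   Context: $G=(V,E)$ is an undirected, unweighted graph with $n=|V|$ and $m=|E|$; $V$ and $m$ are known. The edge set is accessed only through the unitary oracle $\mathcal{O}_G$ mapping $\ket{\{u,v\}}\ket{b}\ket{z}$ to $\ket{\{u,v\}}\ket{b\oplus 1}\ket{z}$ if $\{u,v\}\in E$ and leaving it unchanged otherwise; query complexity counts calls to $\mathcal{O}_G$. $\deg(v)$ is the degree of $v$ in $G$. $\tilde O(\cdot)$ hides $\mathrm{polylog}\, n$ factors. *)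

theory Defs
  imports Complex_Main
begin

definition vpairs :: "nat \<Rightarrow> nat set set" where
  "vpairs n = {e. \<exists>u v. u < n \<and> v < n \<and> u \<noteq> v \<and> e = {u, v}}"

definition is_graph :: "nat \<Rightarrow> nat set set \<Rightarrow> bool" where
  "is_graph n E \<longleftrightarrow> E \<subseteq> vpairs n"

definition deg :: "nat set set \<Rightarrow> nat \<Rightarrow> nat" where
  "deg E v = card {e \<in> E. v \<in> e}"

definition high_set :: "nat \<Rightarrow> real \<Rightarrow> nat set set \<Rightarrow> nat set" where
  "high_set n d E = {v. v < n \<and> real (deg E v) \<ge> 9/10 * real n powr d}"

definition low_set :: "nat \<Rightarrow> real \<Rightarrow> nat set set \<Rightarrow> nat set" where
  "low_set n d E = {v. v < n \<and> real (deg E v) \<le> 11/10 * real n powr d}"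

(* Quantum query model. Computational basis states are triples (e, b, z):
  query register e (a vertex pair), answer bit b, workspace index z < W. *)

type_synonym idx = "nat set \<times> bool \<times> nat"
type_synonym qstate = "idx \<Rightarrow> complex"
type_synonym qmat = "idx \<Rightarrow> idx \<Rightarrow> complex"

definition qbasis :: "nat \<Rightarrow> nat \<Rightarrow> idx set" where
  "qbasis n W = {(e, b, z). e \<in> vpairs n \<and> z < W}"

definition unitary_on :: "idx set \<Rightarrow> qmat \<Rightarrow> bool" where
  "unitary_on B M \<longleftrightarrow>
     (\<forall>i\<in>B. \<forall>j\<in>B. (\<Sum>k\<in>B. cnj (M k i) * M k j) = (if i = j then 1 else 0))"

definition app :: "idx set \<Rightarrow> qmat \<Rightarrow> qstate \<Rightarrow> qstate" where
  "app B M \<psi> = (\<lambda>i. \<Sum>j\<in>B. M i j * \<psi> j)"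

definition query_op :: "nat set set \<Rightarrow> qstate \<Rightarrow> qstate" where
  "query_op E \<psi> = (\<lambda>(e, b, z). \<psi> (e, b \<noteq> (e \<in> E), z))"

(* run [U0, U1, ..., UT] computes UT O_G ... U1 O_G U0 \<psi>, using T queries. *)
fun run :: "idx set \<Rightarrow> nat set set \<Rightarrow> qmat list \<Rightarrow> qstate \<Rightarrow> qstate" where
  "run B E [] \<psi> = \<psi>"
| "run B E [U] \<psi> = app B U \<psi>"
| "run B E (U # U' # Us) \<psi> = run B E (U' # Us) (query_op E (app B U \<psi>))"

definition ket :: "idx \<Rightarrow> qstate" where
  "ket s = (\<lambda>i. if i = s then 1 else 0)"

(* Probability that measuring the final state in the computational basis and
  applying the classical post-processing out yields an output satisfying P. *)
definition out_prob ::
  "idx set \<Rightarrow> nat set set \<Rightarrow> qmat list \<Rightarrow> idx \<Rightarrow> (idx \<Rightarrow> 'o) \<Rightarrow> ('o \<Rightarrow> bool) \<Rightarrow> real" where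
  "out_prob B E Us s0 out P = (\<Sum>j\<in>{j \<in> B. P (out j)}. (cmod (run B E Us (ket s0) j))\<^sup>2)"

(* The output is the set V_h (V_l is its complement in V); success means
  V_h \<subseteq> high set and V_l \<subseteq> low set. *)
definition good_partition :: "nat \<Rightarrow> real \<Rightarrow> nat set set \<Rightarrow> nat set \<Rightarrow> bool" where
  "good_partition n d E Vh \<longleftrightarrow>
     Vh \<subseteq> {..<n} \<and> Vh \<subseteq> high_set n d E \<and> ({..<n} - Vh) \<subseteq> low_set n d E"

end

theory Submission
  imports Defs "HOL-Library.Nat_Bijection"
begin

text \<open>If \<open>m \<le> (11/10) n\<^sup>d\<close>, every vertex is light and no query is needed. Otherwise the
  algorithm takes \<open>R \<approx> 3360 m ln n / n\<^sup>d\<close> independent samples from the state reached after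
  \<open>t \<approx> (\<pi>/4) \<surd>(N/m)\<close> Grover iterations over the \<open>N\<close> vertex pairs with the \<open>m\<close> edges marked,
  recording each sample in the workspace, so that every edge is drawn with probability
  \<open>\<alpha> \<ge> 1/(4m)\<close>. A vertex is declared heavy if it lies on at least \<open>\<tau> = R \<alpha> n\<^sup>d\<close> sampled edges.
  Its expected number of hits is \<open>R \<alpha> deg v\<close>, and \<open>\<tau> \<ge> 840 ln n\<close>, so by a Chernoff bound a
  vertex of degree below \<open>(9/10) n\<^sup>d\<close> or above \<open>(11/10) n\<^sup>d\<close> is misclassified with probability at
  most \<open>1/n\<^sup>2\<close>; a union bound over the \<open>n\<close> vertices gives success probability \<open>1 - 1/n\<close>. The
  algorithm makes \<open>R (t + 2) = O(ln n \<cdot> n\<^bsup>1-d\<^esup> \<surd>m)\<close> queries.\<close>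

lemma qbasis_eq: "qbasis n W = vpairs n \<times> (UNIV \<times> {..<W})"
  unfolding qbasis_def by auto

lemma vpairs_subset_image: "vpairs n \<subseteq> (\<lambda>(u, v). {u, v}) ` ({..<n} \<times> {..<n})"
  unfolding vpairs_def by auto

lemma finite_vpairs: "finite (vpairs n)"
  using vpairs_subset_image by (rule finite_subset) auto

lemma card_vpairs_le: "card (vpairs n) \<le> n * n"
proof -
  have "card (vpairs n) \<le> card ((\<lambda>(u, v). {u, v}) ` ({..<n} \<times> {..<n}))"
    using vpairs_subset_image by (intro card_mono) auto
  also have "\<dots> \<le> card ({..<n} \<times> {..<n})" by (rule card_image_le) simp
  finally show ?thesis by simp
qed

lemma finite_vpairs_elem: "e \<in> vpairs n \<Longrightarrow> finite e"
  unfolding vpairs_def by auto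

lemma deg_le_card: "E \<subseteq> vpairs n \<Longrightarrow> deg E v \<le> card E"
  unfolding deg_def by (intro card_mono) (auto intro: finite_subset finite_vpairs)

definition base_pair :: "nat set" where "base_pair = {0, 1}"

lemma base_pair_in_vpairs: "2 \<le> n \<Longrightarrow> base_pair \<in> vpairs n"
  unfolding vpairs_def base_pair_def by force

lemma finite_qbasis: "finite (qbasis n W)"
  unfolding qbasis_eq using finite_vpairs by auto

lemma sum_qbasis:
  "(\<Sum>i\<in>qbasis n W. F i) = (\<Sum>e\<in>vpairs n. \<Sum>b\<in>UNIV. \<Sum>z<W. F (e, b, z))"
  unfolding qbasis_eq by (simp add: sum.cartesian_product finite_vpairs)

lemma sum_UNIV_bool: "(\<Sum>b\<in>(UNIV::bool set). f b) = f True + f False"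
  by (simp add: UNIV_bool add.commute)

lemma app_ket: "s \<in> B \<Longrightarrow> finite B \<Longrightarrow> app B U (ket s) = (\<lambda>i. U i s)"
  unfolding app_def ket_def by (simp add: if_distrib cong: if_cong)

definition unitary_mat_on :: "'a set \<Rightarrow> ('a \<Rightarrow> 'a \<Rightarrow> complex) \<Rightarrow> bool" where
  "unitary_mat_on S A \<longleftrightarrow>
     (\<forall>i\<in>S. \<forall>j\<in>S. (\<Sum>k\<in>S. cnj (A k i) * A k j) = (if i = j then 1 else 0))"

definition orthogonal_mat_on :: "'a set \<Rightarrow> ('a \<Rightarrow> 'a \<Rightarrow> real) \<Rightarrow> bool" where
  "orthogonal_mat_on S A \<longleftrightarrow>
     (\<forall>i\<in>S. \<forall>j\<in>S. (\<Sum>k\<in>S. A k i * A k j) = (if i = j then 1 else 0))"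

definition cmat :: "('a \<Rightarrow> 'a \<Rightarrow> real) \<Rightarrow> 'a \<Rightarrow> 'a \<Rightarrow> complex" where
  "cmat A = (\<lambda>i j. complex_of_real (A i j))"

lemma orthogonal_imp_unitary_mat:
  assumes "orthogonal_mat_on S A"
  shows "unitary_mat_on S (cmat A)"
  unfolding unitary_mat_on_def
proof (intro ballI)
  fix i j assume "i \<in> S" "j \<in> S"
  have "(\<Sum>k\<in>S. cnj (cmat A k i) * cmat A k j) = complex_of_real (\<Sum>k\<in>S. A k i * A k j)"
    by (simp add: cmat_def)
  then show "(\<Sum>k\<in>S. cnj (cmat A k i) * cmat A k j) = (if i = j then 1 else 0)"
    using assms \<open>i \<in> S\<close> \<open>j \<in> S\<close> unfolding orthogonal_mat_on_def by simp
qed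

definition id_mat :: "'a \<Rightarrow> 'a \<Rightarrow> real" where "id_mat i j = (if i = j then 1 else 0)"

lemma orthogonal_id_mat: "finite S \<Longrightarrow> orthogonal_mat_on S id_mat"
  unfolding orthogonal_mat_on_def
proof (intro ballI)
  fix i j assume "finite S" "i \<in> S"
  have "(\<Sum>k\<in>S. id_mat k i * id_mat k j) = (\<Sum>k\<in>S. if k = i then (if i = j then 1 else 0) else 0)"
    by (intro sum.cong) (auto simp: id_mat_def)
  then show "(\<Sum>k\<in>S. id_mat k i * id_mat k j) = (if i = j then 1 else 0)"
    using \<open>finite S\<close> \<open>i \<in> S\<close> by simp
qed

lemma id_mat_sum: "e \<in> S \<Longrightarrow> finite S \<Longrightarrow> (\<Sum>e'\<in>S. cmat id_mat e e' * f e') = f e"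
proof -
  have "\<And>e'. cmat id_mat e e' * f e' = (if e = e' then f e else 0)" by (simp add: cmat_def id_mat_def)
  then show "e \<in> S \<Longrightarrow> finite S \<Longrightarrow> (\<Sum>e'\<in>S. cmat id_mat e e' * f e') = f e" by simp
qed

text \<open>Grover's diffusion operator \<open>2 |u\<rangle>\<langle>u| - I\<close> for the uniform vector \<open>u\<close> on \<open>S\<close>.\<close>

definition diffusion :: "'a set \<Rightarrow> 'a \<Rightarrow> 'a \<Rightarrow> real" where
  "diffusion S e e' = 2 / real (card S) - (if e = e' then 1 else 0)"

lemma orthogonal_diffusion:
  assumes "finite S"
  shows "orthogonal_mat_on S (diffusion S)"
  unfolding orthogonal_mat_on_def
proof (intro ballI)
  fix i j assume i: "i \<in> S" and j: "j \<in> S"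
  define N where "N = real (card S)"
  have Npos: "N > 0" unfolding N_def using i assms card_gt_0_iff by fastforce
  have "(\<Sum>k\<in>S. diffusion S k i * diffusion S k j) =
     (\<Sum>k\<in>S. 4 / (N * N) - (if k = j then 2 / N else 0) - (if k = i then 2 / N else 0)
        + (if k = i then (if i = j then 1 else 0) else 0))"
    unfolding diffusion_def N_def[symmetric] by (intro sum.cong) (auto simp: algebra_simps)
  also have "\<dots> = N * (4 / (N * N)) - 2 / N - 2 / N + (if i = j then 1 else 0)"
    using i j assms by (simp add: sum.distrib sum_subtractf N_def)
  also have "\<dots> = (if i = j then 1 else 0)" using Npos by (simp add: field_simps)
  finally show "(\<Sum>k\<in>S. diffusion S k i * diffusion S k j) = (if i = j then 1 else 0)" .
qed

text \<open>The Householder reflection \<open>I - 2 w w\<^sup>T / |w|\<^sup>2\<close> along \<open>w = |c\<rangle> - u\<close>, which swaps the basis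
  vector \<open>|c\<rangle>\<close> with the uniform vector \<open>u\<close>; here \<open>|w|\<^sup>2 = 2 (1 - 1/\<surd>|S|)\<close>. If \<open>|S| = 1\<close> then
  \<open>w = 0\<close> and the junk value of division by zero still gives the identity.\<close>

definition reflect_axis :: "'a set \<Rightarrow> 'a \<Rightarrow> 'a \<Rightarrow> real" where
  "reflect_axis S c e = (if e = c then 1 else 0) - 1 / sqrt (card S)"

definition prep_reflection :: "'a set \<Rightarrow> 'a \<Rightarrow> 'a \<Rightarrow> 'a \<Rightarrow> real" where
  "prep_reflection S c e e' =
     (if e = e' then 1 else 0) - reflect_axis S c e * reflect_axis S c e' / (1 - 1 / sqrt (card S))"

lemma reflect_axis_norm_sq:
  assumes "finite S" "c \<in> S"
  shows "(\<Sum>k\<in>S. reflect_axis S c k * reflect_axis S c k) = 2 * (1 - 1 / sqrt (card S))"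
proof -
  define N where "N = real (card S)"
  have Npos: "N > 0" unfolding N_def using assms card_gt_0_iff by fastforce
  have u2: "(1 / sqrt N)\<^sup>2 = 1 / N" using Npos by (simp add: power_divide)
  have "(\<Sum>k\<in>S. reflect_axis S c k * reflect_axis S c k) =
    (\<Sum>k\<in>S. (if k = c then 1 - 2 / sqrt N else 0) + 1 / N)"
    unfolding reflect_axis_def N_def[symmetric]
    by (intro sum.cong refl) (auto simp: algebra_simps power2_eq_square[symmetric] u2 power2_diff)
  also have "\<dots> = 1 - 2 / sqrt N + N * (1 / N)"
    using assms by (simp add: sum.distrib N_def)
  also have "\<dots> = 2 * (1 - 1 / sqrt N)" using Npos by (simp add: field_simps)
  finally show ?thesis unfolding N_def .
qed

lemma orthogonal_prep_reflection:
  assumes "finite S" "c \<in> S"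
  shows "orthogonal_mat_on S (prep_reflection S c)"
  unfolding orthogonal_mat_on_def
proof (intro ballI)
  fix i j assume i: "i \<in> S" and j: "j \<in> S"
  define s where "s = 1 - 1 / sqrt (card S)"
  define w where "w = reflect_axis S c"
  have ws: "(\<Sum>k\<in>S. w k * w k) = 2 * s" unfolding w_def s_def using reflect_axis_norm_sq[OF assms] .
  define X where "X = w i * w j / (s * s)"
  have "(\<Sum>k\<in>S. prep_reflection S c k i * prep_reflection S c k j) =
    (\<Sum>k\<in>S. (if k = i then (if i = j then 1 else 0) else 0) - (if k = i then w i * w j / s else 0)
      - (if k = j then w j * w i / s else 0) + (w k * w k) * X)"
    unfolding prep_reflection_def w_def[symmetric] s_def[symmetric] X_def
    by (intro sum.cong) (auto simp: algebra_simps)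
  also have "\<dots> = (if i = j then 1 else 0) - w i * w j / s - w j * w i / s + 2 * s * X"
    using i j assms(1) by (simp add: sum.distrib sum_subtractf ws sum_distrib_right[symmetric])
  also have "\<dots> = (if i = j then 1 else 0)"
    unfolding X_def by (cases "s = 0") (simp_all add: field_simps)
  finally show "(\<Sum>k\<in>S. prep_reflection S c k i * prep_reflection S c k j) = (if i = j then 1 else 0)" .
qed

lemma prep_reflection_base_column:
  assumes "finite S" "c \<in> S" "e \<in> S"
  shows "prep_reflection S c e c = 1 / sqrt (card S)"
proof (cases "card S = 1")
  case True
  then have "e = c" using assms by (metis card_1_singletonE singletonD)
  then show ?thesis using True unfolding prep_reflection_def reflect_axis_def by simp
next
  case False
  define N where "N = real (card S)"
  have "N > 1" using False assms unfolding N_def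
    by (metis card_gt_0_iff empty_iff less_one nat_neq_iff of_nat_1 of_nat_less_iff)
  then have ne: "1 - 1 / sqrt N \<noteq> 0" by simp
  define u where "u = 1 / sqrt N"
  have "prep_reflection S c e c =
      (if e = c then 1 else 0) - ((if e = c then 1 else 0) - u) * (1 - u) / (1 - u)"
    unfolding prep_reflection_def reflect_axis_def N_def[symmetric] u_def by simp
  also have "\<dots> = u" using ne unfolding u_def[symmetric] by (cases "e = c") (simp_all add: field_simps)
  finally show ?thesis unfolding u_def N_def .
qed

text \<open>On the answer bit: \<open>minus_prep\<close> maps \<open>|0\<rangle>\<close> (\<open>False\<close>) to \<open>|-\<rangle>\<close>, and its transpose
  \<open>minus_unprep\<close> maps \<open>|-\<rangle>\<close> back to \<open>|0\<rangle>\<close>.\<close>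

definition minus_prep :: "bool \<Rightarrow> bool \<Rightarrow> real" where
  "minus_prep b b' = (if b' then 1 / sqrt 2 else (if b then - 1 / sqrt 2 else 1 / sqrt 2))"

definition minus_unprep :: "bool \<Rightarrow> bool \<Rightarrow> real" where "minus_unprep b b' = minus_prep b' b"

lemma orthogonal_minus_prep: "orthogonal_mat_on UNIV minus_prep"
  unfolding orthogonal_mat_on_def minus_prep_def
  by (auto simp: sum_UNIV_bool power2_eq_square[symmetric] power_divide)

lemma orthogonal_minus_unprep: "orthogonal_mat_on UNIV minus_unprep"
  unfolding orthogonal_mat_on_def minus_unprep_def minus_prep_def
  by (auto simp: sum_UNIV_bool power2_eq_square[symmetric] power_divide)

text \<open>\<open>prod_state n W f g z\<close> is \<open>f \<otimes> g \<otimes> |z\<rangle>\<close> on the query register, the answer bit and the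
  workspace; \<open>tensor_op n W A H\<close> is \<open>A \<otimes> H \<otimes> I\<close>.\<close>

definition prod_state ::
  "nat \<Rightarrow> nat \<Rightarrow> (nat set \<Rightarrow> complex) \<Rightarrow> (bool \<Rightarrow> complex) \<Rightarrow> nat \<Rightarrow> qstate" where
  "prod_state n W f g z0 =
     (\<lambda>(e, b, z). if e \<in> vpairs n \<and> z = z0 \<and> z0 < W then f e * g b else 0)"

definition tensor_op ::
  "nat \<Rightarrow> nat \<Rightarrow> (nat set \<Rightarrow> nat set \<Rightarrow> complex) \<Rightarrow> (bool \<Rightarrow> bool \<Rightarrow> complex) \<Rightarrow> qmat" where
  "tensor_op n W A H = (\<lambda>(e, b, z) (e', b', z').
     if e \<in> vpairs n \<and> e' \<in> vpairs n \<and> z < W \<and> z = z' then A e e' * H b b' else 0)"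

lemma prod_state_cong:
  "(\<forall>e\<in>vpairs n. f e = f' e) \<Longrightarrow> (\<forall>b. g b = g' b) \<Longrightarrow> prod_state n W f g z = prod_state n W f' g' z"
  unfolding prod_state_def by (rule ext) auto

lemma app_tensor_op:
  "app (qbasis n W) (tensor_op n W A H) (prod_state n W f g z0) =
   prod_state n W (\<lambda>e. \<Sum>e'\<in>vpairs n. A e e' * f e') (\<lambda>b. \<Sum>b'\<in>UNIV. H b b' * g b') z0"
proof (rule ext, clarify)
  fix e b z
  show "app (qbasis n W) (tensor_op n W A H) (prod_state n W f g z0) (e, b, z) =
    prod_state n W (\<lambda>e. \<Sum>e'\<in>vpairs n. A e e' * f e') (\<lambda>b. \<Sum>b'\<in>UNIV. H b b' * g b') z0 (e, b, z)"
  proof (cases "e \<in> vpairs n \<and> z = z0 \<and> z0 < W")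
    case True
    have "app (qbasis n W) (tensor_op n W A H) (prod_state n W f g z0) (e, b, z) =
      (\<Sum>e'\<in>vpairs n. \<Sum>b'\<in>UNIV. \<Sum>z'<W. (if z' = z0 then A e e' * H b b' * (f e' * g b') else 0))"
      unfolding app_def sum_qbasis using True
      by (intro sum.cong refl) (auto simp: tensor_op_def prod_state_def)
    also have "\<dots> = (\<Sum>e'\<in>vpairs n. \<Sum>b'\<in>UNIV. A e e' * H b b' * (f e' * g b'))"
      using True by simp
    also have "\<dots> = (\<Sum>e'\<in>vpairs n. A e e' * f e') * (\<Sum>b'\<in>UNIV. H b b' * g b')"
      by (simp add: sum_product mult_ac) (rule sum.swap)
    finally show ?thesis using True by (simp add: prod_state_def)
  next
    case False
    have "app (qbasis n W) (tensor_op n W A H) (prod_state n W f g z0) (e, b, z) = 0"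
      unfolding app_def sum_qbasis using False
      by (intro sum.neutral ballI) (auto simp: tensor_op_def prod_state_def)
    thus ?thesis using False unfolding prod_state_def by auto
  qed
qed

lemma unitary_tensor_op:
  assumes "unitary_mat_on (vpairs n) A" "unitary_mat_on UNIV H"
  shows "unitary_on (qbasis n W) (tensor_op n W A H)"
  unfolding unitary_on_def
proof (clarify)
  fix e1 b1 z1 e2 b2 z2
  assume 1: "(e1, b1, z1) \<in> qbasis n W" and 2: "(e2, b2, z2) \<in> qbasis n W"
  have "(\<Sum>k\<in>qbasis n W. cnj (tensor_op n W A H k (e1, b1, z1)) * tensor_op n W A H k (e2, b2, z2))
     = (\<Sum>e\<in>vpairs n. \<Sum>b\<in>UNIV. \<Sum>z<W. if z = z1 \<and> z = z2 then
          (cnj (A e e1) * A e e2) * (cnj (H b b1) * H b b2) else 0)"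
    unfolding sum_qbasis using 1 2
    by (intro sum.cong refl) (auto simp: tensor_op_def qbasis_def mult_ac)
  also have "\<dots> = (if z1 = z2 then (\<Sum>e\<in>vpairs n. cnj (A e e1) * A e e2) *
        (\<Sum>b\<in>UNIV. cnj (H b b1) * H b b2) else 0)"
  proof (cases "z1 = z2")
    case True
    then show ?thesis using 1 2 by (simp add: qbasis_def sum_product mult_ac) (rule sum.swap)
  next
    case False
    then show ?thesis by (auto intro!: sum.neutral)
  qed
  also have "\<dots> = (if (e1, b1, z1) = (e2, b2, z2) then 1 else 0)"
    using assms 1 2 unfolding unitary_mat_on_def qbasis_def by auto
  finally show "(\<Sum>k\<in>qbasis n W. cnj (tensor_op n W A H k (e1, b1, z1)) * tensor_op n W A H k (e2, b2, z2)) =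
       (if (e1, b1, z1) = (e2, b2, z2) then 1 else 0)" .
qed

lemma unitary_tensor_op_real:
  "orthogonal_mat_on (vpairs n) A \<Longrightarrow> orthogonal_mat_on UNIV H \<Longrightarrow>
   unitary_on (qbasis n W) (tensor_op n W (cmat A) (cmat H))"
  by (intro unitary_tensor_op orthogonal_imp_unitary_mat)

lemma unitary_on_permute_columns:
  assumes "unitary_on B U" "bij_betw p B B"
  shows "unitary_on B (\<lambda>i j. U i (p j))"
  unfolding unitary_on_def
proof (intro ballI)
  fix i j assume "i \<in> B" "j \<in> B"
  then have p: "p i \<in> B" "p j \<in> B" "p i = p j \<longleftrightarrow> i = j"
    using assms(2) by (auto simp: bij_betw_def inj_on_def)
  then have "(\<Sum>k\<in>B. cnj (U k (p i)) * U k (p j)) = (if p i = p j then 1 else 0)"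
    using assms(1) unfolding unitary_on_def by blast
  then show "(\<Sum>k\<in>B. cnj (U k (p i)) * U k (p j)) = (if i = j then 1 else 0)"
    using p(3) by simp
qed

lemma tensor_op_column:
  "e0 \<in> vpairs n \<Longrightarrow> z0 < W \<Longrightarrow>
   tensor_op n W A H i (e0, b0, z0) = prod_state n W (\<lambda>e. A e e0) (\<lambda>b. H b b0) z0 i"
  unfolding tensor_op_def prod_state_def by (cases i) auto

definition minus_amp :: "bool \<Rightarrow> complex" where
  "minus_amp b = (if b then - 1 / sqrt 2 else 1 / sqrt 2)"

definition zero_amp :: "bool \<Rightarrow> complex" where "zero_amp b = (if b then 0 else 1)"

definition uniform_amp :: "nat \<Rightarrow> nat set \<Rightarrow> complex" where
  "uniform_amp n = (\<lambda>e. complex_of_real (1 / sqrt (card (vpairs n))))"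

definition edge_sign :: "nat set set \<Rightarrow> nat set \<Rightarrow> complex" where
  "edge_sign E e = (if e \<in> E then -1 else 1)"

text \<open>With the answer bit in \<open>|-\<rangle>\<close> a query is the phase oracle; with the bit in \<open>|0\<rangle>\<close> it
  writes the membership bit \<open>[e \<in> E]\<close>.\<close>

lemma query_op_minus:
  "query_op E (prod_state n W f minus_amp z0) = prod_state n W (\<lambda>e. edge_sign E e * f e) minus_amp z0"
  by (rule ext) (auto simp: query_op_def prod_state_def minus_amp_def edge_sign_def)

lemma query_op_zero:
  "query_op E (prod_state n W f zero_amp z0) =
   (\<lambda>(e, b, z). if e \<in> vpairs n \<and> z = z0 \<and> z0 < W \<and> b = (e \<in> E) then f e else 0)"
  by (rule ext) (auto simp: query_op_def prod_state_def zero_amp_def)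

lemma minus_prep_column: "cmat minus_prep b False = minus_amp b"
  by (cases b) (simp_all add: cmat_def minus_prep_def minus_amp_def)

lemma id_mat_minus: "(\<Sum>b'\<in>UNIV. cmat id_mat b b' * minus_amp b') = minus_amp b"
  by (cases b) (auto simp: sum_UNIV_bool cmat_def id_mat_def)

lemma minus_unprep_minus: "(\<Sum>b'\<in>UNIV. cmat minus_unprep b b' * minus_amp b') = zero_amp b"
proof -
  have s: "complex_of_real (sqrt 2) * complex_of_real (sqrt 2) = 2"
    by (simp flip: of_real_mult)
  show ?thesis
    by (cases b) (auto simp: sum_UNIV_bool cmat_def minus_unprep_def minus_prep_def minus_amp_def
        zero_amp_def field_simps s)
qed

fun run_queries :: "idx set \<Rightarrow> nat set set \<Rightarrow> qmat list \<Rightarrow> qstate \<Rightarrow> qstate" where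
  "run_queries B E [] \<psi> = \<psi>"
| "run_queries B E (U # Us) \<psi> = run_queries B E Us (app B U (query_op E \<psi>))"

lemma run_Cons_eq: "run B E (U # Us) \<psi> = run_queries B E Us (app B U \<psi>)"
  by (induction Us arbitrary: U \<psi>) simp_all

lemma run_queries_append:
  "run_queries B E (xs @ ys) \<psi> = run_queries B E ys (run_queries B E xs \<psi>)"
  by (induction xs arbitrary: \<psi>) auto

lemma app_linear:
  "app B U (\<lambda>i. \<Sum>x\<in>X. c x * \<phi> x i) = (\<lambda>i. \<Sum>x\<in>X. c x * app B U (\<phi> x) i)"
  unfolding app_def by (auto simp: sum_distrib_left mult_ac intro: sum.swap)

lemma query_op_linear:
  "query_op E (\<lambda>i. \<Sum>x\<in>X. c x * \<phi> x i) = (\<lambda>i. \<Sum>x\<in>X. c x * query_op E (\<phi> x) i)"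
  unfolding query_op_def by auto

lemma run_queries_linear:
  "run_queries B E Us (\<lambda>i. \<Sum>x\<in>X. c x * \<phi> x i) = (\<lambda>i. \<Sum>x\<in>X. c x * run_queries B E Us (\<phi> x) i)"
proof (induction Us arbitrary: \<phi>)
  case Nil then show ?case by simp
next
  case (Cons U Us)
  show ?case
    by (simp add: query_op_linear app_linear Cons.IH[of "\<lambda>x. app B U (query_op E (\<phi> x))", symmetric])
qed

section \<open>Grover's rotation\<close>

text \<open>Starting from the uniform state, after
  \<open>t\<close> iterations every marked item has amplitude \<open>fst (amps t)\<close> and every unmarked one
  \<open>snd (amps t)\<close>; the state rotates by \<open>2 \<theta>\<close> per iteration, where \<open>sin \<theta> = \<surd>(m/N)\<close>.\<close>

lemma rotation_fst_identity:
  fixes r q a c N :: real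
  assumes "N \<noteq> 0"
  shows "r * (2 * ((- (r * r) * a + (q * q) * c) / N) + a) =
    r * a * (1 - 2 * (r * r) / N) + q * c * (2 * r * q / N)"
  using assms by (simp add: field_simps)

lemma rotation_snd_identity:
  fixes r q a c N :: real
  assumes "N \<noteq> 0" "r * r + q * q = N"
  shows "q * (2 * ((- (r * r) * a + (q * q) * c) / N) - c) =
    q * c * (1 - 2 * (r * r) / N) - r * a * (2 * r * q / N)"
proof -
  have sub: "1 - 2 * (r * r) / N = 2 * (q * q) / N - 1"
    using assms by (simp add: field_simps)
  show ?thesis unfolding sub using assms(1) by (simp add: field_simps)
qed

locale grover =
  fixes N m :: nat
  assumes mpos: "0 < m" and mN: "m \<le> N"
begin

definition angle :: real where "angle = arcsin (sqrt (real m / real N))"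

fun amps :: "nat \<Rightarrow> real \<times> real" where
  "amps 0 = (1 / sqrt N, 1 / sqrt N)"
| "amps (Suc t) = (let (a, c) = amps t; M = (- real m * a + (real N - real m) * c) / real N
                   in (2 * M + a, 2 * M - c))"

lemma Npos: "0 < N" using mpos mN by simp

lemma sin_angle: "sin angle = sqrt (real m / real N)"
  unfolding angle_def using mN Npos by (intro sin_arcsin) (auto intro: order_trans[OF _ real_sqrt_ge_zero])

lemma cos_angle: "cos angle = sqrt ((real N - real m) / real N)"
proof -
  have "cos angle = sqrt (1 - (sqrt (real m / real N))\<^sup>2)"
    unfolding angle_def using mN Npos by (intro cos_arcsin) (auto intro: order_trans[OF _ real_sqrt_ge_zero])
  also have "1 - (sqrt (real m / real N))\<^sup>2 = (real N - real m) / real N" using Npos by (simp add: field_simps)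
  finally show ?thesis .
qed

lemma cos_double_angle: "cos (2 * angle) = 1 - 2 * real m / real N"
  using sin_angle mN by (simp add: cos_double_sin)

lemma sin_double_angle: "sin (2 * angle) = 2 * sqrt (real m) * sqrt (real N - real m) / real N"
proof -
  have "sqrt (real m / real N) * sqrt ((real N - real m) / real N) = sqrt (real m) * sqrt (real N - real m) / real N"
    using Npos by (simp add: real_sqrt_divide real_sqrt_mult[symmetric])
  then show ?thesis using sin_angle cos_angle by (simp add: sin_double)
qed

lemma amps_Suc_rotation:
  defines "x \<equiv> \<lambda>t. sqrt (real m) * fst (amps t)" and "y \<equiv> \<lambda>t. sqrt (real N - real m) * snd (amps t)"
  shows "x (Suc t) = x t * cos (2 * angle) + y t * sin (2 * angle)"
    and "y (Suc t) = y t * cos (2 * angle) - x t * sin (2 * angle)"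
proof -
  obtain a c where amps_eq: "amps t = (a, c)" by fastforce
  have sm: "sqrt (real m) * sqrt (real m) = real m" by simp
  have snm: "sqrt (real N - real m) * sqrt (real N - real m) = real N - real m" using mN by simp
  have N0: "real N \<noteq> 0" using Npos by simp
  have N2: "sqrt (real m) * sqrt (real m) + sqrt (real N - real m) * sqrt (real N - real m) = real N"
    unfolding sm snm by simp
  have rec: "amps (Suc t) = (2 * ((- real m * a + (real N - real m) * c) / real N) + a,
                            2 * ((- real m * a + (real N - real m) * c) / real N) - c)"
    using amps_eq by (simp add: Let_def)
  show "x (Suc t) = x t * cos (2 * angle) + y t * sin (2 * angle)"
    using rotation_fst_identity[OF N0, of "sqrt (real m)" a "sqrt (real N - real m)" c]
    unfolding x_def y_def cos_double_angle sin_double_angle amps_eq rec sm snm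
    by (simp add: algebra_simps)
  show "y (Suc t) = y t * cos (2 * angle) - x t * sin (2 * angle)"
    using rotation_snd_identity[OF N0 N2, of a c]
    unfolding x_def y_def cos_double_angle sin_double_angle amps_eq rec sm snm
    by (simp add: algebra_simps)
qed

lemma amps_closed_form:
  "sqrt (real m) * fst (amps t) = sin ((2 * real t + 1) * angle)"
  "sqrt (real N - real m) * snd (amps t) = cos ((2 * real t + 1) * angle)"
proof (induction t)
  case 0
  have "sqrt m * (1 / sqrt N) = sqrt (real m / real N)"
    "sqrt (real N - real m) * (1 / sqrt N) = sqrt ((real N - real m) / real N)"
    by (simp_all add: real_sqrt_divide)
  then show "sqrt (real m) * fst (amps 0) = sin ((2 * real 0 + 1) * angle)"
    "sqrt (real N - real m) * snd (amps 0) = cos ((2 * real 0 + 1) * angle)"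
    using sin_angle cos_angle by simp_all
next
  case (Suc t)
  have ang: "(2 * real (Suc t) + 1) * angle = (2 * real t + 1) * angle + 2 * angle"
    by (simp add: algebra_simps)
  show "sqrt (real m) * fst (amps (Suc t)) = sin ((2 * real (Suc t) + 1) * angle)"
    "sqrt (real N - real m) * snd (amps (Suc t)) = cos ((2 * real (Suc t) + 1) * angle)"
    unfolding amps_Suc_rotation ang sin_add cos_add Suc.IH by (simp_all add: algebra_simps)
qed

lemma angle_bounds: "0 < angle" "angle \<le> pi / 2" "sqrt (real m / real N) \<le> angle"
proof -
  have s0: "0 < sqrt (real m / real N)" using mpos Npos by simp
  have s1: "sqrt (real m / real N) \<le> 1" using mN Npos by simp
  have b: "- (pi/2) \<le> angle \<and> angle \<le> pi/2" unfolding angle_def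
    by (rule arcsin_bounded) (use s0 s1 in linarith)+
  then show "angle \<le> pi / 2" by simp
  show "0 < angle"
  proof (rule ccontr)
    assume "\<not> 0 < angle"
    hence "sin angle \<le> sin 0" using b by (intro sin_monotone_2pi_le) auto
    thus False using sin_angle s0 by simp
  qed
  then show "sqrt (real m / real N) \<le> angle" using sin_x_le_x[of angle] sin_angle by simp
qed

text \<open>The number of iterations after which the state is closest to the marked subspace.\<close>

definition steps :: nat where "steps = nat \<lfloor>pi / (4 * angle) - 1/2\<rfloor>"

lemma steps_angle_bounds: "pi / 6 \<le> (2 * real steps + 1) * angle" "(2 * real steps + 1) * angle \<le> pi / 2"
proof -
  define x where "x = pi / (4 * angle) - 1/2"
  have th0: "0 < angle" and th1: "angle \<le> pi/2" using angle_bounds by auto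
  have "pi / (4 * (pi/2)) \<le> pi / (4 * angle)" using th0 th1 by (intro divide_left_mono) auto
  then have x0: "0 \<le> x" unfolding x_def by simp
  have t1: "real steps \<le> x" and t2: "x < real steps + 1"
    unfolding steps_def x_def[symmetric] using x0 by linarith+
  have xth: "(2 * x + 1) * angle = pi / 2" unfolding x_def using th0 by (simp add: field_simps)
  show "(2 * real steps + 1) * angle \<le> pi / 2"
    using t1 th0 xth by (metis add_le_cancel_right mult_le_cancel_right_pos mult_left_mono zero_le_numeral)
  have "(2 * x + 1) * angle < (2 * real steps + 3) * angle" using t2 th0 by (intro mult_strict_right_mono) auto
  then have "pi / 2 - 2 * angle < (2 * real steps + 1) * angle" using xth by (simp add: algebra_simps)
  moreover have "angle \<le> (2 * real steps + 1) * angle" using th0 by simp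
  ultimately show "pi / 6 \<le> (2 * real steps + 1) * angle" by (cases "angle \<le> pi / 6") auto
qed

lemma amps_steps_lower_bound: "1 / (4 * real m) \<le> (fst (amps steps))\<^sup>2"
proof -
  have "sin (pi / 6) \<le> sin ((2 * real steps + 1) * angle)"
    using steps_angle_bounds by (intro sin_monotone_2pi_le) auto
  then have "(1/2)\<^sup>2 \<le> (sqrt (real m) * fst (amps steps))\<^sup>2"
    unfolding amps_closed_form by (intro power_mono) (auto simp: sin_30)
  also have "\<dots> = real m * (fst (amps steps))\<^sup>2" by (simp add: power_mult_distrib)
  finally have "1/4 \<le> real m * (fst (amps steps))\<^sup>2" by (simp add: power_divide)
  then show ?thesis using mpos by (simp add: field_simps)
qed

lemma steps_le: "real steps \<le> pi / 4 * sqrt (real N / real m)"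
proof -
  have th0: "0 < angle" using angle_bounds by auto
  have s0: "0 < sqrt (real m / real N)" using mpos Npos by simp
  have "real steps * (4 * angle) \<le> pi"
    using steps_angle_bounds(2) th0 by (simp add: algebra_simps)
  then have "real steps \<le> pi / (4 * angle)" using th0 by (simp add: pos_le_divide_eq)
  also have "pi / (4 * angle) \<le> pi / (4 * sqrt (real m / real N))"
    using angle_bounds(3) s0 th0 by (intro divide_left_mono) (auto intro: mult_pos_pos)
  also have "\<dots> = pi / 4 * sqrt (real N / real m)"
    using mpos Npos by (simp add: real_sqrt_divide field_simps)
  finally show ?thesis .
qed

end

locale grover_graph = grover +
  fixes n :: nat and E :: "nat set set"
  assumes Evp: "E \<subseteq> vpairs n" and cardE: "card E = m" and Ndef: "N = card (vpairs n)"
begin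

definition grover_iter :: "(nat set \<Rightarrow> complex) \<Rightarrow> nat set \<Rightarrow> complex" where
  "grover_iter f = (\<lambda>e. \<Sum>e'\<in>vpairs n. cmat (diffusion (vpairs n)) e e' * (edge_sign E e' * f e'))"

lemma finite_E: "finite E" using Evp finite_vpairs finite_subset by blast

lemma sum_if_marked:
  fixes a c :: "'a :: comm_ring_1"
  shows "(\<Sum>e\<in>vpairs n. if e \<in> E then a else c) = of_nat m * a + (of_nat N - of_nat m) * c"
proof -
  have "vpairs n \<inter> {e. e \<in> E} = E" "vpairs n \<inter> - {e. e \<in> E} = vpairs n - E" using Evp by auto
  moreover have "card (vpairs n - E) = N - m"
    using Evp finite_E by (simp add: card_Diff_subset cardE Ndef)
  ultimately show ?thesis using mN by (simp add: sum.If_cases finite_vpairs cardE)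
qed

lemma sum_edge_sign:
  assumes "\<forall>e\<in>vpairs n. f e = of_real (if e \<in> E then a else c)"
  shows "(\<Sum>e\<in>vpairs n. edge_sign E e * f e) = of_real (- real m * a + (real N - real m) * c)"
proof -
  have "(\<Sum>e\<in>vpairs n. edge_sign E e * f e) = (\<Sum>e\<in>vpairs n. if e \<in> E then of_real (- a) else of_real c)"
    using assms by (intro sum.cong) (auto simp: edge_sign_def)
  then show ?thesis unfolding sum_if_marked by simp
qed

lemma grover_iter_step:
  assumes "\<forall>e\<in>vpairs n. f e = of_real (if e \<in> E then a else c)"
  shows "\<forall>e\<in>vpairs n. grover_iter f e = of_real (if e \<in> E then
      2 * ((- real m * a + (real N - real m) * c) / real N) + a
    else 2 * ((- real m * a + (real N - real m) * c) / real N) - c)"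
proof
  fix e assume e: "e \<in> vpairs n"
  have "grover_iter f e = (\<Sum>e'\<in>vpairs n. 2 / of_nat N * (edge_sign E e' * f e')
      - (if e = e' then edge_sign E e' * f e' else 0))"
    unfolding grover_iter_def cmat_def diffusion_def Ndef[symmetric]
    by (intro sum.cong) (simp_all add: algebra_simps)
  also have "\<dots> = 2 / of_nat N * (\<Sum>e'\<in>vpairs n. edge_sign E e' * f e') - edge_sign E e * f e"
    using e by (simp add: sum_subtractf sum_distrib_left finite_vpairs)
  also have "\<dots> = of_real (if e \<in> E then
      2 * ((- real m * a + (real N - real m) * c) / real N) + a
    else 2 * ((- real m * a + (real N - real m) * c) / real N) - c)"
    using assms e unfolding sum_edge_sign[OF assms] by (auto simp: edge_sign_def)
  finally show "grover_iter f e = \<dots>" .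
qed

lemma grover_iter_power:
  "\<forall>e\<in>vpairs n. (grover_iter ^^ t) (uniform_amp n) e = of_real (if e \<in> E then fst (amps t) else snd (amps t))"
proof (induction t)
  case 0 then show ?case by (simp add: uniform_amp_def Ndef[symmetric])
next
  case (Suc t)
  obtain a c where amps_eq: "amps t = (a, c)" by fastforce
  show ?case using grover_iter_step[of "(grover_iter ^^ t) (uniform_amp n)" a c] Suc amps_eq
    by (simp add: Let_def)
qed

end

section \<open>Recording the samples in the workspace\<close>

text \<open>The workspace stores the list of (pair, answer bit) samples taken so far, as a natural
  number via the bijections of \<open>Nat_Bijection\<close>.\<close>

definition encode_hist :: "(nat set \<times> bool) list \<Rightarrow> nat" where
  "encode_hist h = list_encode (map (\<lambda>(e, b). prod_encode (set_encode e, of_bool b)) h)"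

definition decode_hist :: "nat \<Rightarrow> (nat set \<times> bool) list" where
  "decode_hist z = map (\<lambda>k. case prod_decode k of (a, b) \<Rightarrow> (set_decode a, b \<noteq> 0)) (list_decode z)"

lemma decode_encode_hist: "\<forall>x\<in>set h. finite (fst x) \<Longrightarrow> decode_hist (encode_hist h) = h"
  unfolding encode_hist_def decode_hist_def by (induction h) auto

definition histories :: "nat \<Rightarrow> nat \<Rightarrow> (nat set \<times> bool) list set" where
  "histories n R = {h. set h \<subseteq> vpairs n \<times> UNIV \<and> length h \<le> R}"

lemma finite_histories: "finite (histories n R)"
  unfolding histories_def by (rule finite_lists_length_le) (use finite_vpairs in auto)

lemma Cons_histories:
  "e \<in> vpairs n \<Longrightarrow> h \<in> histories n R \<Longrightarrow> length h < R \<Longrightarrow> (e, b) # h \<in> histories n R"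
  unfolding histories_def by auto

lemma decode_encode_histories: "h \<in> histories n R \<Longrightarrow> decode_hist (encode_hist h) = h"
  by (rule decode_encode_hist) (auto simp: histories_def finite_vpairs_elem)

definition workspace_size :: "nat \<Rightarrow> nat \<Rightarrow> nat" where
  "workspace_size n R = Suc (Max (encode_hist ` histories n R))"

lemma encode_hist_lt_workspace: "h \<in> histories n R \<Longrightarrow> encode_hist h < workspace_size n R"
  unfolding workspace_size_def using finite_histories by (simp add: le_imp_less_Suc)

lemma bij_betw_extend:
  assumes "finite A" "D \<subseteq> A" "inj_on f D" "f ` D \<subseteq> A"
  shows "\<exists>g. bij_betw g A A \<and> (\<forall>x\<in>D. g x = f x)"
proof -
  have "card (A - D) = card (A - f ` D)"
    using assms by (simp add: card_Diff_subset card_image finite_subset)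
  then obtain h where h: "bij_betw h (A - D) (A - f ` D)"
    using finite_same_card_bij[of "A - D" "A - f ` D"] assms by auto
  define g where "g x = (if x \<in> D then f x else h x)" for x
  have "bij_betw g D (f ` D)" unfolding g_def using assms(3)
    by (simp add: bij_betw_def inj_on_def cong: image_cong)
  moreover have "bij_betw g (A - D) (A - f ` D)" unfolding g_def using h
    by (rule bij_betw_cong[THEN iffD1, rotated]) auto
  ultimately have "bij_betw g (D \<union> (A - D)) (f ` D \<union> (A - f ` D))"
    by (rule bij_betw_combine) auto
  moreover have "D \<union> (A - D) = A" "f ` D \<union> (A - f ` D) = A" using assms by auto
  ultimately show ?thesis unfolding g_def by auto
qed

text \<open>Moving the query register and answer bit onto the recorded history and resetting them to
  \<open>|base_pair, 0\<rangle>\<close> is injective on the basis states that matter; any permutation of the basis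
  extending it is a unitary gate.\<close>

definition push_hist :: "idx \<Rightarrow> idx" where
  "push_hist x = (case x of (e, b, z) \<Rightarrow> (base_pair, False, encode_hist ((e, b) # decode_hist z)))"

definition push_domain :: "nat \<Rightarrow> nat \<Rightarrow> idx set" where
  "push_domain n R =
     {(e, b, encode_hist h) | e b h. e \<in> vpairs n \<and> h \<in> histories n R \<and> length h < R}"

lemma push_hist_eq:
  "h \<in> histories n R \<Longrightarrow> push_hist (e, b, encode_hist h) = (base_pair, False, encode_hist ((e, b) # h))"
  unfolding push_hist_def by (simp add: decode_encode_histories)

lemma push_domain_props:
  assumes "2 \<le> n"
  shows "push_domain n R \<subseteq> qbasis n (workspace_size n R)"
    and "inj_on push_hist (push_domain n R)"
    and "push_hist ` push_domain n R \<subseteq> qbasis n (workspace_size n R)"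
proof -
  show "push_domain n R \<subseteq> qbasis n (workspace_size n R)"
    unfolding push_domain_def qbasis_def using encode_hist_lt_workspace by auto
  show "inj_on push_hist (push_domain n R)"
  proof (rule inj_onI)
    fix x y assume "x \<in> push_domain n R" "y \<in> push_domain n R" and eq: "push_hist x = push_hist y"
    then obtain e b h e' b' h' where
      x: "x = (e, b, encode_hist h)" "(e, b) # h \<in> histories n R" "h \<in> histories n R" and
      y: "y = (e', b', encode_hist h')" "(e', b') # h' \<in> histories n R" "h' \<in> histories n R"
      unfolding push_domain_def by (blast intro: Cons_histories)
    have "encode_hist ((e, b) # h) = encode_hist ((e', b') # h')"
      using eq unfolding x(1) y(1) push_hist_eq[OF x(3)] push_hist_eq[OF y(3)] by simp
    then have "(e, b) # h = (e', b') # h'"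
      using decode_encode_histories[OF x(2)] decode_encode_histories[OF y(2)] by metis
    then show "x = y" using x(1) y(1) by simp
  qed
  show "push_hist ` push_domain n R \<subseteq> qbasis n (workspace_size n R)"
    unfolding push_domain_def qbasis_def
    using base_pair_in_vpairs[OF assms] encode_hist_lt_workspace Cons_histories
    by (force simp: push_hist_eq)
qed

definition push_perm :: "nat \<Rightarrow> nat \<Rightarrow> idx \<Rightarrow> idx" where
  "push_perm n R = (SOME g. bij_betw g (qbasis n (workspace_size n R)) (qbasis n (workspace_size n R))
                          \<and> (\<forall>x\<in>push_domain n R. g x = push_hist x))"

lemma push_perm_props:
  assumes "2 \<le> n"
  shows "bij_betw (push_perm n R) (qbasis n (workspace_size n R)) (qbasis n (workspace_size n R))"
    and "\<forall>x\<in>push_domain n R. push_perm n R x = push_hist x"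
proof -
  have "\<exists>g. bij_betw g (qbasis n (workspace_size n R)) (qbasis n (workspace_size n R))
          \<and> (\<forall>x\<in>push_domain n R. g x = push_hist x)"
    using bij_betw_extend[OF finite_qbasis push_domain_props[OF assms]] .
  from someI_ex[OF this]
  show "bij_betw (push_perm n R) (qbasis n (workspace_size n R)) (qbasis n (workspace_size n R))"
    and "\<forall>x\<in>push_domain n R. push_perm n R x = push_hist x"
    unfolding push_perm_def by auto
qed

section \<open>The sampling algorithm\<close>

text \<open>One round samples a vertex pair from Grover's state after \<open>t\<close> iterations: \<open>t\<close> Grover
  iterations (phase queries), one phase query followed by resetting the bit to \<open>|0\<rangle>\<close>, one query
  writing \<open>[e \<in> E]\<close>, and then \<open>record_op\<close>, which pushes (pair, bit) onto the recorded history
  and prepares a fresh uniform superposition with the bit in \<open>|-\<rangle>\<close>. The extra phase query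
  keeps every gate preceded by a query; it only flips signs. \<open>sampler n R t\<close> runs \<open>R\<close> rounds,
  i.e.\ \<open>R (t + 2)\<close> queries.\<close>

definition prep_op :: "nat \<Rightarrow> nat \<Rightarrow> qmat" where
  "prep_op n R = tensor_op n (workspace_size n R) (cmat (prep_reflection (vpairs n) base_pair)) (cmat minus_prep)"

definition record_op :: "nat \<Rightarrow> nat \<Rightarrow> qmat" where
  "record_op n R = (\<lambda>i j. prep_op n R i (push_perm n R j))"

definition grover_op :: "nat \<Rightarrow> nat \<Rightarrow> qmat" where
  "grover_op n R = tensor_op n (workspace_size n R) (cmat (diffusion (vpairs n))) (cmat id_mat)"

definition unprep_op :: "nat \<Rightarrow> nat \<Rightarrow> qmat" where
  "unprep_op n R = tensor_op n (workspace_size n R) (cmat id_mat) (cmat minus_unprep)"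

definition sample_round :: "nat \<Rightarrow> nat \<Rightarrow> nat \<Rightarrow> qmat list" where
  "sample_round n R t = replicate t (grover_op n R) @ [unprep_op n R, record_op n R]"

definition sampler :: "nat \<Rightarrow> nat \<Rightarrow> nat \<Rightarrow> qmat list" where
  "sampler n R t = prep_op n R # concat (replicate R (sample_round n R t))"

definition start_idx :: idx where "start_idx = (base_pair, False, encode_hist [])"

lemma length_sampler: "length (sampler n R t) - 1 = R * (t + 2)"
  unfolding sampler_def sample_round_def by (simp add: length_concat sum_list_replicate)

lemma workspace_size_pos: "workspace_size n R > 0"
  unfolding workspace_size_def by simp

lemma start_idx_in_qbasis: "2 \<le> n \<Longrightarrow> start_idx \<in> qbasis n (workspace_size n R)"
  unfolding start_idx_def qbasis_def
  using base_pair_in_vpairs[of n] encode_hist_lt_workspace[of "[]" n R] by (simp add: histories_def)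

lemma prep_op_unitary: "2 \<le> n \<Longrightarrow> unitary_on (qbasis n (workspace_size n R)) (prep_op n R)"
  unfolding prep_op_def
  by (intro unitary_tensor_op_real orthogonal_prep_reflection orthogonal_minus_prep
      base_pair_in_vpairs finite_vpairs)

lemma grover_op_unitary: "unitary_on (qbasis n (workspace_size n R)) (grover_op n R)"
  unfolding grover_op_def
  by (intro unitary_tensor_op_real orthogonal_diffusion orthogonal_id_mat finite_vpairs finite_UNIV)

lemma unprep_op_unitary: "unitary_on (qbasis n (workspace_size n R)) (unprep_op n R)"
  unfolding unprep_op_def
  by (intro unitary_tensor_op_real orthogonal_id_mat orthogonal_minus_unprep finite_vpairs)

lemma record_op_unitary:
  assumes "2 \<le> n"
  shows "unitary_on (qbasis n (workspace_size n R)) (record_op n R)"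
  unfolding record_op_def
  using unitary_on_permute_columns[OF prep_op_unitary[OF assms] push_perm_props(1)[OF assms]] .

lemma sampler_unitary:
  assumes "2 \<le> n"
  shows "\<forall>U\<in>set (sampler n R t). unitary_on (qbasis n (workspace_size n R)) U"
  unfolding sampler_def sample_round_def
  using prep_op_unitary[OF assms] record_op_unitary[OF assms] grover_op_unitary unprep_op_unitary
  by (auto simp: set_replicate_conv_if)

abbreviation fresh_state :: "nat \<Rightarrow> nat \<Rightarrow> nat \<Rightarrow> qstate" where
  "fresh_state n R z \<equiv> prod_state n (workspace_size n R) (uniform_amp n) minus_amp z"

lemma prep_op_base_column:
  "2 \<le> n \<Longrightarrow> z < workspace_size n R \<Longrightarrow> prep_op n R i (base_pair, False, z) = fresh_state n R z i"
  unfolding prep_op_def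
  by (subst tensor_op_column)
     (auto intro!: base_pair_in_vpairs prod_state_cong[THEN fun_cong]
       simp: minus_prep_column[unfolded cmat_def] cmat_def prep_reflection_base_column finite_vpairs
         base_pair_in_vpairs uniform_amp_def)

lemma record_op_column:
  assumes "2 \<le> n" "e \<in> vpairs n" "h \<in> histories n R" "length h < R"
  shows "record_op n R i (e, b, encode_hist h) = fresh_state n R (encode_hist ((e, b) # h)) i"
proof -
  have "(e, b, encode_hist h) \<in> push_domain n R" unfolding push_domain_def using assms by blast
  then have "push_perm n R (e, b, encode_hist h) = (base_pair, False, encode_hist ((e, b) # h))"
    using push_perm_props(2)[OF assms(1)] push_hist_eq[OF assms(3)] by simp
  moreover have "encode_hist ((e, b) # h) < workspace_size n R"
    using assms by (intro encode_hist_lt_workspace Cons_histories)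
  ultimately show ?thesis unfolding record_op_def using prep_op_base_column[OF assms(1)] by simp
qed

lemma sampler_first_step:
  "2 \<le> n \<Longrightarrow> app (qbasis n (workspace_size n R)) (prep_op n R) (ket start_idx) = fresh_state n R (encode_hist [])"
  by (rule ext, subst app_ket)
     (auto simp: start_idx_in_qbasis[unfolded start_idx_def] finite_qbasis start_idx_def
       prep_op_base_column encode_hist_lt_workspace histories_def)

lemma app_query_zero:
  assumes "z0 < W"
  shows "app (qbasis n W) U (query_op E (prod_state n W f zero_amp z0)) =
    (\<lambda>i. \<Sum>e\<in>vpairs n. U i (e, e \<in> E, z0) * f e)"
proof (rule ext)
  fix i
  have "(\<Sum>b\<in>UNIV. \<Sum>z<W. U i (e, b, z) * (if z = z0 \<and> b = (e \<in> E) then f e else 0)) =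
        U i (e, e \<in> E, z0) * f e" for e
  proof -
    have "(\<Sum>z<W. U i (e, b, z) * (if z = z0 \<and> b = (e \<in> E) then f e else 0)) =
          (if b = (e \<in> E) then U i (e, b, z0) * f e else 0)" for b
      using assms by (simp add: if_distrib[of "\<lambda>x. U i (e, b, _) * x"] cong: if_cong)
    then show ?thesis by (simp add: sum_UNIV_bool)
  qed
  then show "app (qbasis n W) U (query_op E (prod_state n W f zero_amp z0)) i =
      (\<Sum>e\<in>vpairs n. U i (e, e \<in> E, z0) * f e)"
    unfolding query_op_zero app_def sum_qbasis using assms by (intro sum.cong) auto
qed

context grover_graph
begin

lemma grover_op_step:
  "app (qbasis n (workspace_size n R)) (grover_op n R) (query_op E (prod_state n (workspace_size n R) f minus_amp z)) =
   prod_state n (workspace_size n R) (grover_iter f) minus_amp z"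
  unfolding query_op_minus grover_op_def app_tensor_op
  by (rule prod_state_cong) (auto simp: grover_iter_def id_mat_minus)

lemma run_grover_ops:
  "run_queries (qbasis n (workspace_size n R)) E (replicate t (grover_op n R)) (prod_state n (workspace_size n R) f minus_amp z) =
   prod_state n (workspace_size n R) ((grover_iter ^^ t) f) minus_amp z"
proof (induction t arbitrary: f)
  case 0 then show ?case by simp
next
  case (Suc t)
  show ?case by (simp add: grover_op_step Suc.IH funpow_Suc_right del: funpow.simps)
qed

lemma unprep_op_step:
  "app (qbasis n (workspace_size n R)) (unprep_op n R) (query_op E (prod_state n (workspace_size n R) f minus_amp z)) =
   prod_state n (workspace_size n R) (\<lambda>e. edge_sign E e * f e) zero_amp z"
  unfolding query_op_minus unprep_op_def app_tensor_op
  by (rule prod_state_cong) (auto simp: id_mat_sum finite_vpairs minus_unprep_minus)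

definition sample_amp :: "nat \<Rightarrow> nat set \<Rightarrow> complex" where
  "sample_amp t = (\<lambda>e. edge_sign E e * (grover_iter ^^ t) (uniform_amp n) e)"

lemma sample_round_step:
  assumes "2 \<le> n" "h \<in> histories n R" "length h < R"
  shows "run_queries (qbasis n (workspace_size n R)) E (sample_round n R t) (fresh_state n R (encode_hist h)) =
    (\<lambda>i. \<Sum>e\<in>vpairs n. sample_amp t e * fresh_state n R (encode_hist ((e, e \<in> E) # h)) i)"
proof -
  have "encode_hist h < workspace_size n R" using assms(2) by (rule encode_hist_lt_workspace)
  then show ?thesis
    unfolding sample_round_def run_queries_append run_grover_ops
    by (simp add: unprep_op_step app_query_zero record_op_column[OF assms(1) _ assms(2,3)]
        sample_amp_def mult.commute cong: sum.cong)
qed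

end

definition edge_seqs :: "nat \<Rightarrow> nat \<Rightarrow> nat set list set" where
  "edge_seqs n j = {h. set h \<subseteq> vpairs n \<and> length h = j}"

lemma edge_seqs_0: "edge_seqs n 0 = {[]}"
  unfolding edge_seqs_def by auto

lemma edge_seqs_Suc: "edge_seqs n (Suc j) = (\<lambda>(e, h). e # h) ` (vpairs n \<times> edge_seqs n j)"
  unfolding edge_seqs_def by (auto simp: length_Suc_conv image_iff)

lemma finite_edge_seqs: "finite (edge_seqs n j)"
  unfolding edge_seqs_def by (rule finite_lists_length_eq) (rule finite_vpairs)

lemma sum_edge_seqs_Suc:
  "(\<Sum>h\<in>edge_seqs n (Suc j). F h) = (\<Sum>e\<in>vpairs n. \<Sum>h\<in>edge_seqs n j. F (e # h))"
proof -
  have "inj_on (\<lambda>(e, h). e # h) (vpairs n \<times> edge_seqs n j)" by (auto simp: inj_on_def)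
  then have "(\<Sum>h\<in>edge_seqs n (Suc j). F h) = (\<Sum>(e, h)\<in>vpairs n \<times> edge_seqs n j. F (e # h))"
    unfolding edge_seqs_Suc by (simp add: sum.reindex split_def)
  also have "\<dots> = (\<Sum>e\<in>vpairs n. \<Sum>h\<in>edge_seqs n j. F (e # h))"
    by (simp add: sum.cartesian_product)
  finally show ?thesis .
qed

lemma sum_prod_list_edge_seqs:
  "(\<Sum>h\<in>edge_seqs n j. prod_list (map f h)) = (\<Sum>e\<in>vpairs n. f e :: 'a :: comm_semiring_1) ^ j"
proof (induction j)
  case 0 then show ?case by (simp add: edge_seqs_0)
next
  case (Suc j) then show ?case by (simp add: sum_edge_seqs_Suc sum_distrib_right flip: sum_distrib_left)
qed

context grover_graph
begin

definition label_seq :: "nat set list \<Rightarrow> (nat set \<times> bool) list" where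
  "label_seq h = map (\<lambda>e. (e, e \<in> E)) h"

definition seq_amp :: "nat \<Rightarrow> nat set list \<Rightarrow> complex" where
  "seq_amp t h = prod_list (map (sample_amp t) h)"

definition round_state :: "nat \<Rightarrow> nat \<Rightarrow> nat \<Rightarrow> qstate" where
  "round_state R t j = (\<lambda>i. \<Sum>h\<in>edge_seqs n j. seq_amp t h * fresh_state n R (encode_hist (label_seq h)) i)"

lemma label_seq_histories: "h \<in> edge_seqs n j \<Longrightarrow> j \<le> R \<Longrightarrow> label_seq h \<in> histories n R"
  unfolding edge_seqs_def histories_def label_seq_def by auto

lemma round_state_0: "round_state R t 0 = fresh_state n R (encode_hist [])"
  unfolding round_state_def edge_seqs_0 by (simp add: seq_amp_def label_seq_def)

lemma round_state_Suc:
  assumes "2 \<le> n" "j < R"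
  shows "run_queries (qbasis n (workspace_size n R)) E (sample_round n R t) (round_state R t j) =
    round_state R t (Suc j)"
proof -
  have "run_queries (qbasis n (workspace_size n R)) E (sample_round n R t) (round_state R t j) =
    (\<lambda>i. \<Sum>h\<in>edge_seqs n j. seq_amp t h *
       (\<Sum>e\<in>vpairs n. sample_amp t e * fresh_state n R (encode_hist ((e, e \<in> E) # label_seq h)) i))"
    unfolding round_state_def run_queries_linear
  proof (intro ext sum.cong refl)
    fix i h assume h: "h \<in> edge_seqs n j"
    then have "label_seq h \<in> histories n R" "length (label_seq h) < R"
      using assms(2) label_seq_histories[of h j R] by (auto simp: edge_seqs_def label_seq_def)
    then show "seq_amp t h * run_queries (qbasis n (workspace_size n R)) E (sample_round n R t)
          (fresh_state n R (encode_hist (label_seq h))) i =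
        seq_amp t h * (\<Sum>e\<in>vpairs n. sample_amp t e * fresh_state n R (encode_hist ((e, e \<in> E) # label_seq h)) i)"
      by (simp add: sample_round_step[OF assms(1)])
  qed
  also have "\<dots> = round_state R t (Suc j)"
    unfolding round_state_def sum_edge_seqs_Suc
    by (rule ext) (simp add: sum_distrib_left seq_amp_def label_seq_def mult_ac sum.swap[of _ "edge_seqs n j"])
  finally show ?thesis .
qed

lemma run_sample_rounds:
  assumes "2 \<le> n" "j + k \<le> R"
  shows "run_queries (qbasis n (workspace_size n R)) E (concat (replicate k (sample_round n R t))) (round_state R t j) =
    round_state R t (j + k)"
  using assms(2)
proof (induction k arbitrary: j)
  case 0 then show ?case by simp
next
  case (Suc k)
  then show ?case by (simp add: run_queries_append round_state_Suc[OF assms(1)])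
qed

lemma run_sampler:
  "2 \<le> n \<Longrightarrow> run (qbasis n (workspace_size n R)) E (sampler n R t) (ket start_idx) = round_state R t R"
  unfolding sampler_def run_Cons_eq sampler_first_step round_state_0[of R t, symmetric]
  using run_sample_rounds[of 0 R] by simp

end

definition hit_count :: "nat \<Rightarrow> (nat set \<times> bool) list \<Rightarrow> nat" where
  "hit_count v hs = length (filter (\<lambda>(e, b). b \<and> v \<in> e) hs)"

definition heavy_estimate :: "nat \<Rightarrow> real \<Rightarrow> (nat set \<times> bool) list \<Rightarrow> nat set" where
  "heavy_estimate n \<tau> hs = {v. v < n \<and> \<tau> \<le> real (hit_count v hs)}"

definition sampler_out :: "nat \<Rightarrow> real \<Rightarrow> idx \<Rightarrow> nat set" where
  "sampler_out n \<tau> = (\<lambda>(e, b, z). heavy_estimate n \<tau> (decode_hist z))"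

lemma cmod_sum_delta_sq:
  assumes "inj_on c L" "finite L"
  shows "(cmod (\<Sum>h\<in>L. A h * (if z = c h then 1 else 0)))\<^sup>2 =
    (\<Sum>h\<in>L. if z = c h then (cmod (A h))\<^sup>2 else 0)"
proof (cases "\<exists>h0\<in>L. z = c h0")
  case True
  then obtain h0 where h0: "h0 \<in> L" "z = c h0" by blast
  have eq: "\<And>h. h \<in> L \<Longrightarrow> (z = c h) = (h = h0)" using assms(1) h0 by (auto simp: inj_on_def)
  have "(\<Sum>h\<in>L. A h * (if z = c h then 1 else 0)) = (\<Sum>h\<in>L. if h = h0 then A h else 0)"
    by (intro sum.cong refl) (simp add: eq)
  moreover have "(\<Sum>h\<in>L. if z = c h then (cmod (A h))\<^sup>2 else 0) = (\<Sum>h\<in>L. if h = h0 then (cmod (A h))\<^sup>2 else 0)"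
    by (intro sum.cong refl) (simp add: eq)
  ultimately show ?thesis using h0 assms(2) by simp
next
  case False
  then show ?thesis by (auto intro!: sum.neutral)
qed

lemma sum_cmod_sq_superposition:
  fixes W :: nat
  assumes "inj_on c L" "finite L" "c ` L \<subseteq> {..<W}"
  shows "(\<Sum>z<W. if Q z then (cmod (\<Sum>h\<in>L. A h * (if z = c h then 1 else 0)))\<^sup>2 else 0) =
    (\<Sum>h\<in>L. if Q (c h) then (cmod (A h))\<^sup>2 else 0)"
proof -
  have "(\<Sum>z<W. if Q z then (cmod (\<Sum>h\<in>L. A h * (if z = c h then 1 else 0)))\<^sup>2 else 0) =
      (\<Sum>z<W. \<Sum>h\<in>L. if z = c h \<and> Q (c h) then (cmod (A h))\<^sup>2 else 0)"
  proof (intro sum.cong refl)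
    fix z
    have "(\<Sum>h\<in>L. if z = c h \<and> Q (c h) then (cmod (A h))\<^sup>2 else 0) =
        (\<Sum>h\<in>L. if Q z then (if z = c h then (cmod (A h))\<^sup>2 else 0) else 0)"
      by (intro sum.cong) auto
    then show "(if Q z then (cmod (\<Sum>h\<in>L. A h * (if z = c h then 1 else 0)))\<^sup>2 else 0) =
        (\<Sum>h\<in>L. if z = c h \<and> Q (c h) then (cmod (A h))\<^sup>2 else 0)"
      unfolding cmod_sum_delta_sq[OF assms(1,2)] by simp
  qed
  also have "\<dots> = (\<Sum>h\<in>L. \<Sum>z<W. if z = c h \<and> Q (c h) then (cmod (A h))\<^sup>2 else 0)"
    by (rule sum.swap)
  also have "\<dots> = (\<Sum>h\<in>L. if Q (c h) then (cmod (A h))\<^sup>2 else 0)"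
  proof (intro sum.cong refl)
    fix h assume "h \<in> L"
    then have "c h < W" using assms(3) by auto
    then show "(\<Sum>z<W. if z = c h \<and> Q (c h) then (cmod (A h))\<^sup>2 else 0) =
        (if Q (c h) then (cmod (A h))\<^sup>2 else 0)" by simp
  qed
  finally show ?thesis .
qed

context grover_graph
begin

lemma cmod_uniform_amp_sq: "(cmod (uniform_amp n e))\<^sup>2 = 1 / real N"
  unfolding uniform_amp_def Ndef by (simp add: norm_divide power_divide)

lemma cmod_minus_amp_sq: "(cmod (minus_amp b))\<^sup>2 = 1 / 2"
  unfolding minus_amp_def by (simp add: power_divide norm_divide)

lemma round_state_final:
  assumes "e \<in> vpairs n"
  shows "round_state R t R (e, b, z) =
    uniform_amp n e * minus_amp b * (\<Sum>h\<in>edge_seqs n R. seq_amp t h * (if z = encode_hist (label_seq h) then 1 else 0))"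
proof -
  have "encode_hist (label_seq h) < workspace_size n R" if "h \<in> edge_seqs n R" for h
    using label_seq_histories[OF that order_refl] by (rule encode_hist_lt_workspace)
  then show ?thesis
    using assms unfolding round_state_def prod_state_def sum_distrib_left
    by (intro sum.cong) (auto simp: mult_ac)
qed

lemma inj_encode_label_seq: "inj_on (\<lambda>h. encode_hist (label_seq h)) (edge_seqs n R)"
proof (rule inj_onI)
  fix h h' assume h: "h \<in> edge_seqs n R" and h': "h' \<in> edge_seqs n R"
    and eq: "encode_hist (label_seq h) = encode_hist (label_seq h')"
  have "label_seq h = label_seq h'"
    using eq decode_encode_histories[OF label_seq_histories[OF h order_refl]]
      decode_encode_histories[OF label_seq_histories[OF h' order_refl]] by metis
  moreover have "map fst (label_seq x) = x" for x by (simp add: label_seq_def comp_def)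
  ultimately show "h = h'" by metis
qed

lemma out_prob_sampler:
  assumes "2 \<le> n"
  shows "out_prob (qbasis n (workspace_size n R)) E (sampler n R t) start_idx (sampler_out n \<tau>) P =
    (\<Sum>h\<in>edge_seqs n R. if P (heavy_estimate n \<tau> (label_seq h)) then (cmod (seq_amp t h))\<^sup>2 else 0)"
proof -
  let ?W = "workspace_size n R"
  let ?S = "\<lambda>z. \<Sum>h\<in>edge_seqs n R. seq_amp t h * (if z = encode_hist (label_seq h) then 1 else 0)"
  let ?Q = "\<lambda>z. P (heavy_estimate n \<tau> (decode_hist z))"
  have N0: "real N \<noteq> 0" using Npos by simp
  have point: "(if P (sampler_out n \<tau> (e, b, z)) then (cmod (round_state R t R (e, b, z)))\<^sup>2 else 0) =
      1 / real N * (1 / 2) * (if ?Q z then (cmod (?S z))\<^sup>2 else 0)" if "e \<in> vpairs n" for e b z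
    unfolding round_state_final[OF that] norm_mult power_mult_distrib cmod_uniform_amp_sq cmod_minus_amp_sq
    by (simp add: sampler_out_def)
  have "out_prob (qbasis n ?W) E (sampler n R t) start_idx (sampler_out n \<tau>) P =
     (\<Sum>e\<in>vpairs n. \<Sum>b\<in>(UNIV::bool set). \<Sum>z<?W. 1 / real N * (1 / 2) * (if ?Q z then (cmod (?S z))\<^sup>2 else 0))"
    unfolding out_prob_def run_sampler[OF assms] sum.inter_filter[OF finite_qbasis] sum_qbasis
    by (intro sum.cong refl) (simp add: point)
  also have "\<dots> = (\<Sum>z<?W. if ?Q z then (cmod (?S z))\<^sup>2 else 0)"
    using N0 by (simp add: Ndef sum_distrib_left[symmetric] sum_divide_distrib[symmetric])
  also have "\<dots> = (\<Sum>h\<in>edge_seqs n R. if ?Q (encode_hist (label_seq h)) then (cmod (seq_amp t h))\<^sup>2 else 0)"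
    using label_seq_histories encode_hist_lt_workspace
    by (intro sum_cmod_sq_superposition inj_encode_label_seq finite_edge_seqs) blast
  also have "\<dots> = (\<Sum>h\<in>edge_seqs n R. if P (heavy_estimate n \<tau> (label_seq h)) then (cmod (seq_amp t h))\<^sup>2 else 0)"
    using decode_encode_histories[OF label_seq_histories[OF _ order_refl]] by (intro sum.cong) auto
  finally show ?thesis .
qed

end

section \<open>A Chernoff bound for independent samples\<close>

text \<open>Summing product weights over \<open>edge_seqs n R\<close> is taking expectations over \<open>R\<close> independent
  samples from the distribution \<open>w\<close> on the vertex pairs.\<close>

lemma prod_list_mult_exp_sum_list:
  fixes w X :: "'a \<Rightarrow> real"
  shows "prod_list (map w h) * exp (\<mu> * sum_list (map X h)) = prod_list (map (\<lambda>e. w e * exp (\<mu> * X e)) h)"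
  by (induction h) (simp_all add: distrib_left exp_add)

lemma exp_moment_edge_seqs:
  fixes w :: "nat set \<Rightarrow> real"
  assumes "(\<Sum>e\<in>vpairs n. w e) = 1"
  shows "(\<Sum>h\<in>edge_seqs n R. prod_list (map w h) * exp (\<mu> * sum_list (map (\<lambda>e. of_bool (Q e)) h))) =
    (1 + (\<Sum>e\<in>vpairs n. if Q e then w e else 0) * (exp \<mu> - 1)) ^ R"
proof -
  have "(\<Sum>e\<in>vpairs n. w e * exp (\<mu> * of_bool (Q e))) =
      (\<Sum>e\<in>vpairs n. w e + (if Q e then w e else 0) * (exp \<mu> - 1))"
    by (intro sum.cong) (auto simp: algebra_simps)
  also have "\<dots> = 1 + (\<Sum>e\<in>vpairs n. if Q e then w e else 0) * (exp \<mu> - 1)"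
    by (simp add: sum.distrib assms sum_distrib_right)
  finally show ?thesis by (simp add: prod_list_mult_exp_sum_list sum_prod_list_edge_seqs)
qed

lemma one_plus_mult_power_le_exp:
  fixes q x :: real
  assumes "0 \<le> q" "q \<le> 1" "-1 \<le> x"
  shows "(1 + q * x) ^ R \<le> exp (real R * q * x)"
proof -
  have "q * (-1) \<le> q * x" using assms by (intro mult_left_mono) auto
  then have "0 \<le> 1 + q * x" using assms(2) by linarith
  moreover have "1 + q * x \<le> exp (q * x)" by (rule exp_ge_add_one_self)
  ultimately have "(1 + q * x) ^ R \<le> exp (q * x) ^ R" by (intro power_mono)
  also have "\<dots> = exp (real R * q * x)" by (simp add: exp_of_nat_mult[symmetric] mult.assoc)
  finally show ?thesis .
qed

lemma chernoff_edge_seqs: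
  fixes w :: "nat set \<Rightarrow> real" and Q :: "nat set \<Rightarrow> bool" and n R :: nat and \<mu> a :: real
  defines "q \<equiv> (\<Sum>e\<in>vpairs n. if Q e then w e else 0)"
  assumes w0: "\<forall>e\<in>vpairs n. 0 \<le> w e" and w1: "(\<Sum>e\<in>vpairs n. w e) = 1"
    and P: "\<forall>h. P h \<longrightarrow> 0 \<le> \<mu> * (sum_list (map (\<lambda>e. of_bool (Q e)) h) - a)"
  shows "(\<Sum>h\<in>edge_seqs n R. if P h then prod_list (map w h) else 0) \<le> exp (- \<mu> * a + real R * q * (exp \<mu> - 1))"
proof -
  let ?X = "\<lambda>h. sum_list (map (\<lambda>e. of_bool (Q e)) h)"
  have pos: "0 \<le> prod_list (map w h)" if "h \<in> edge_seqs n R" for h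
    using w0 that unfolding edge_seqs_def by (auto intro!: prod_list_nonneg simp: subset_iff)
  have "(\<Sum>h\<in>edge_seqs n R. if P h then prod_list (map w h) else 0) \<le>
      (\<Sum>h\<in>edge_seqs n R. prod_list (map w h) * exp (\<mu> * (?X h - a)))"
  proof (rule sum_mono)
    fix h assume "h \<in> edge_seqs n R"
    moreover have "P h \<Longrightarrow> 1 \<le> exp (\<mu> * (?X h - a))" using P by simp
    ultimately show "(if P h then prod_list (map w h) else 0) \<le> prod_list (map w h) * exp (\<mu> * (?X h - a))"
      using pos mult_left_mono[of 1 "exp (\<mu> * (?X h - a))" "prod_list (map w h)"] by auto
  qed
  also have "\<dots> = exp (- \<mu> * a) * (\<Sum>h\<in>edge_seqs n R. prod_list (map w h) * exp (\<mu> * ?X h))"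
    by (simp add: sum_distrib_left right_diff_distrib exp_diff exp_minus field_simps)
  also have "\<dots> = exp (- \<mu> * a) * (1 + q * (exp \<mu> - 1)) ^ R"
    unfolding exp_moment_edge_seqs[OF w1] q_def ..
  also have "\<dots> \<le> exp (- \<mu> * a) * exp (real R * q * (exp \<mu> - 1))"
  proof -
    have "q \<le> (\<Sum>e\<in>vpairs n. w e)" unfolding q_def using w0 by (intro sum_mono) auto
    moreover have "0 \<le> q" unfolding q_def using w0 by (auto intro!: sum_nonneg)
    ultimately show ?thesis using w1 by (intro mult_left_mono one_plus_mult_power_le_exp) auto
  qed
  also have "\<dots> = exp (- \<mu> * a + real R * q * (exp \<mu> - 1))" by (simp add: exp_add[symmetric])
  finally show ?thesis .
qed

section \<open>Classifying the vertices\<close>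

lemma exp_le_inverse_one_minus:
  fixes x :: real
  assumes "x < 1"
  shows "exp x \<le> 1 / (1 - x)"
proof -
  have "1 - x \<le> exp (- x)" using exp_ge_add_one_self[of "- x"] by simp
  then have "inverse (exp (- x)) \<le> inverse (1 - x)" using assms by (intro le_imp_inverse_le) auto
  then show ?thesis by (simp add: exp_minus divide_inverse)
qed

lemma exp_neg_le_inverse_one_plus:
  fixes x :: real
  assumes "0 \<le> x"
  shows "exp (- x) \<le> 1 / (1 + x)"
proof -
  have "1 + x \<le> exp x" by (rule exp_ge_add_one_self)
  then have "inverse (exp x) \<le> inverse (1 + x)" using assms by (intro le_imp_inverse_le) auto
  then show ?thesis by (simp add: exp_minus divide_inverse)
qed

definition misclassified :: "nat set set \<Rightarrow> real \<Rightarrow> real \<Rightarrow> (nat set \<times> bool) list \<Rightarrow> nat \<Rightarrow> bool" where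
  "misclassified E D \<tau> hs v \<longleftrightarrow>
     (real (deg E v) < 9/10 * D \<and> \<tau> \<le> real (hit_count v hs)) \<or>
     (11/10 * D < real (deg E v) \<and> real (hit_count v hs) < \<tau>)"

lemma good_partition_heavy_estimate:
  assumes "\<forall>v<n. \<not> misclassified E (real n powr d) \<tau> hs v"
  shows "good_partition n d E (heavy_estimate n \<tau> hs)"
  using assms unfolding good_partition_def heavy_estimate_def high_set_def low_set_def misclassified_def
  by force

context grover_graph
begin

definition sample_prob :: "nat \<Rightarrow> nat set \<Rightarrow> real" where
  "sample_prob t e = (cmod (sample_amp t e))\<^sup>2"

lemma sample_prob_nonneg: "0 \<le> sample_prob t e"
  unfolding sample_prob_def by simp

lemma sample_prob_eq:
  "e \<in> vpairs n \<Longrightarrow> sample_prob t e = (if e \<in> E then (fst (amps t))\<^sup>2 else (snd (amps t))\<^sup>2)"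
  unfolding sample_prob_def sample_amp_def using grover_iter_power[of t]
  by (auto simp: edge_sign_def norm_mult)

lemma cmod_seq_amp_sq: "(cmod (seq_amp t h))\<^sup>2 = prod_list (map (sample_prob t) h)"
  unfolding seq_amp_def sample_prob_def by (induction h) (auto simp: norm_mult power_mult_distrib)

lemma sum_sample_prob: "(\<Sum>e\<in>vpairs n. sample_prob t e) = 1"
proof -
  have "(\<Sum>e\<in>vpairs n. sample_prob t e) = (\<Sum>e\<in>vpairs n. if e \<in> E then (fst (amps t))\<^sup>2 else (snd (amps t))\<^sup>2)"
    by (intro sum.cong) (auto simp: sample_prob_eq)
  also have "\<dots> = (sqrt (real m) * fst (amps t))\<^sup>2 + (sqrt (real N - real m) * snd (amps t))\<^sup>2"
    unfolding sum_if_marked using mN by (simp add: power_mult_distrib)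
  also have "\<dots> = 1" unfolding amps_closed_form by simp
  finally show ?thesis .
qed

lemma sum_prod_sample_prob: "(\<Sum>h\<in>edge_seqs n R. prod_list (map (sample_prob t) h)) = 1"
  unfolding sum_prod_list_edge_seqs sum_sample_prob by simp

lemma hit_count_label_seq:
  "real (hit_count v (label_seq h)) = sum_list (map (\<lambda>e. of_bool (e \<in> E \<and> v \<in> e)) h)"
  unfolding hit_count_def label_seq_def by (induction h) auto

lemma sum_sample_prob_incident:
  "(\<Sum>e\<in>vpairs n. if e \<in> E \<and> v \<in> e then sample_prob t e else 0) = (fst (amps t))\<^sup>2 * real (deg E v)"
proof -
  have "(\<Sum>e\<in>vpairs n. if e \<in> E \<and> v \<in> e then sample_prob t e else 0) =
      (\<Sum>e\<in>{e \<in> vpairs n. e \<in> E \<and> v \<in> e}. (fst (amps t))\<^sup>2)"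
    unfolding sum.inter_filter[OF finite_vpairs, symmetric] by (intro sum.cong) (auto simp: sample_prob_eq)
  also have "{e \<in> vpairs n. e \<in> E \<and> v \<in> e} = {e \<in> E. v \<in> e}" using Evp by auto
  finally show ?thesis by (simp add: deg_def)
qed

lemma upper_tail:
  fixes R t :: nat and D :: real
  assumes "0 \<le> D" "real (deg E v) \<le> 9/10 * D"
  defines "\<tau> \<equiv> real R * (fst (amps t))\<^sup>2 * D"
  shows "(\<Sum>h\<in>edge_seqs n R. if \<tau> \<le> real (hit_count v (label_seq h))
           then prod_list (map (sample_prob t) h) else 0) \<le> exp (- \<tau> / 380)"
proof -
  let ?\<alpha> = "(fst (amps t))\<^sup>2"
  have "(\<Sum>h\<in>edge_seqs n R. if \<tau> \<le> real (hit_count v (label_seq h)) then prod_list (map (sample_prob t) h) else 0)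
      \<le> exp (- (1/20) * \<tau> + real R * (?\<alpha> * real (deg E v)) * (exp (1/20) - 1))"
    unfolding sum_sample_prob_incident[symmetric]
    by (rule chernoff_edge_seqs) (auto simp: sample_prob_nonneg sum_sample_prob hit_count_label_seq)
  also have "\<dots> \<le> exp (- \<tau> / 380)"
  proof -
    have "exp (1/20) - 1 \<le> (1/19::real)" using exp_le_inverse_one_minus[of "1/20"] by simp
    then have "real R * (?\<alpha> * real (deg E v)) * (exp (1/20) - 1) \<le> real R * (?\<alpha> * (9/10 * D)) * (1/19)"
      using assms(1,2) by (intro mult_mono mult_left_mono) auto
    then show ?thesis unfolding \<tau>_def by (simp add: algebra_simps)
  qed
  finally show ?thesis .
qed

lemma lower_tail:
  fixes R t :: nat and D :: real
  assumes "0 \<le> D" "11/10 * D \<le> real (deg E v)"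
  defines "\<tau> \<equiv> real R * (fst (amps t))\<^sup>2 * D"
  shows "(\<Sum>h\<in>edge_seqs n R. if real (hit_count v (label_seq h)) < \<tau>
           then prod_list (map (sample_prob t) h) else 0) \<le> exp (- \<tau> / 420)"
proof -
  let ?\<alpha> = "(fst (amps t))\<^sup>2"
  have "(\<Sum>h\<in>edge_seqs n R. if real (hit_count v (label_seq h)) < \<tau> then prod_list (map (sample_prob t) h) else 0)
      \<le> exp (- (-1/20) * \<tau> + real R * (?\<alpha> * real (deg E v)) * (exp (-1/20) - 1))"
    unfolding sum_sample_prob_incident[symmetric]
    by (rule chernoff_edge_seqs) (auto simp: sample_prob_nonneg sum_sample_prob hit_count_label_seq)
  also have "\<dots> \<le> exp (- \<tau> / 420)"
  proof -
    have "(1/21::real) \<le> 1 - exp (-1/20)" using exp_neg_le_inverse_one_plus[of "1/20"] by simp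
    then have "real R * (?\<alpha> * (11/10 * D)) * (1/21) \<le> real R * (?\<alpha> * real (deg E v)) * (1 - exp (-1/20))"
      using assms(1,2) by (intro mult_mono mult_left_mono) auto
    then show ?thesis unfolding \<tau>_def by (simp add: algebra_simps)
  qed
  finally show ?thesis .
qed

lemma prob_misclassified:
  fixes R t :: nat and D :: real
  assumes "0 \<le> D"
  defines "\<tau> \<equiv> real R * (fst (amps t))\<^sup>2 * D"
  shows "(\<Sum>h\<in>edge_seqs n R. if misclassified E D \<tau> (label_seq h) v
           then prod_list (map (sample_prob t) h) else 0) \<le> exp (- \<tau> / 420)"
proof -
  have "0 \<le> \<tau>" unfolding \<tau>_def using assms(1) by simp
  consider "real (deg E v) < 9/10 * D" | "11/10 * D < real (deg E v)" |
    "9/10 * D \<le> real (deg E v) \<and> real (deg E v) \<le> 11/10 * D" by linarith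
  then show ?thesis
  proof cases
    case 1
    then have "(\<Sum>h\<in>edge_seqs n R. if misclassified E D \<tau> (label_seq h) v
        then prod_list (map (sample_prob t) h) else 0) \<le> exp (- \<tau> / 380)"
      using upper_tail[OF assms(1), of v R t] assms(1) unfolding misclassified_def \<tau>_def by simp
    also have "\<dots> \<le> exp (- \<tau> / 420)" using \<open>0 \<le> \<tau>\<close> by simp
    finally show ?thesis .
  next
    case 2
    then show ?thesis using lower_tail[OF assms(1), of v R t] assms(1) unfolding misclassified_def \<tau>_def by simp
  next
    case 3
    then show ?thesis unfolding misclassified_def by simp
  qed
qed

lemma prob_good_partition:
  fixes R t :: nat and d :: real
  defines "\<tau> \<equiv> real R * (fst (amps t))\<^sup>2 * real n powr d"
  assumes "2 \<le> n" and "840 * ln (real n) \<le> \<tau>"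
  shows "1 - 1 / real n \<le> (\<Sum>h\<in>edge_seqs n R. if good_partition n d E (heavy_estimate n \<tau> (label_seq h))
            then prod_list (map (sample_prob t) h) else 0)"
proof -
  let ?w = "\<lambda>h. prod_list (map (sample_prob t) h)"
  let ?bad = "\<lambda>v h. misclassified E (real n powr d) \<tau> (label_seq h) v"
  let ?G = "\<lambda>h. good_partition n d E (heavy_estimate n \<tau> (label_seq h))"
  have w0: "0 \<le> ?w h" for h by (auto intro!: prod_list_nonneg simp: sample_prob_nonneg)
  have union: "(if \<not> ?G h then ?w h else 0) \<le> (\<Sum>v<n. if ?bad v h then ?w h else 0)" for h
  proof (cases "?G h")
    case False
    then obtain v where v: "v < n" "?bad v h" using good_partition_heavy_estimate by blast
    have "(if ?bad v h then ?w h else 0) \<le> (\<Sum>v<n. if ?bad v h then ?w h else 0)"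
      by (rule member_le_sum) (use v w0 in auto)
    then show ?thesis using False v by simp
  qed (simp add: w0 sum_nonneg)
  have "exp (- \<tau> / 420) \<le> exp (- 2 * ln (real n))" using assms(3) by simp
  also have "\<dots> = 1 / (real n)\<^sup>2"
    using assms(2) by (simp add: exp_minus exp_of_nat_mult[of 2, simplified] power2_eq_square divide_inverse)
  finally have small: "exp (- \<tau> / 420) \<le> 1 / (real n)\<^sup>2" .
  have "(\<Sum>h\<in>edge_seqs n R. if \<not> ?G h then ?w h else 0) \<le> (\<Sum>h\<in>edge_seqs n R. \<Sum>v<n. if ?bad v h then ?w h else 0)"
    by (rule sum_mono) (rule union)
  also have "\<dots> = (\<Sum>v<n. \<Sum>h\<in>edge_seqs n R. if ?bad v h then ?w h else 0)" by (rule sum.swap)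
  also have "\<dots> \<le> (\<Sum>v<n. 1 / (real n)\<^sup>2)"
    using order_trans[OF prob_misclassified small[unfolded \<tau>_def]] unfolding \<tau>_def
    by (intro sum_mono) simp
  also have "\<dots> = 1 / real n" by (simp add: power2_eq_square)
  finally have "(\<Sum>h\<in>edge_seqs n R. if \<not> ?G h then ?w h else 0) \<le> 1 / real n" .
  moreover have "(\<Sum>h\<in>edge_seqs n R. if ?G h then ?w h else 0) + (\<Sum>h\<in>edge_seqs n R. if \<not> ?G h then ?w h else 0) = 1"
    unfolding sum.distrib[symmetric] sum_prod_sample_prob[where R=R and t=t, symmetric] by (intro sum.cong) auto
  ultimately show ?thesis by linarith
qed

end

definition partition_algorithm :: "nat \<Rightarrow> nat \<Rightarrow> real \<Rightarrow> real \<Rightarrow> bool" where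
  "partition_algorithm n m d T \<longleftrightarrow>
     (\<exists>(W::nat) (Us::qmat list) (s::idx) (out::idx \<Rightarrow> nat set).
        W > 0 \<and> Us \<noteq> [] \<and> s \<in> qbasis n W \<and>
        (\<forall>U\<in>set Us. unitary_on (qbasis n W) U) \<and>
        real (length Us - 1) \<le> T \<and>
        (\<forall>E. is_graph n E \<and> card E = m \<longrightarrow>
           out_prob (qbasis n W) E Us s out (good_partition n d E) \<ge> 1 - 1 / real n))"

lemma partition_algorithm_mono:
  "partition_algorithm n m d T \<Longrightarrow> T \<le> T' \<Longrightarrow> partition_algorithm n m d T'"
  unfolding partition_algorithm_def by (meson order_trans)

lemma trivial_partition_algorithm:
  assumes "2 \<le> n" and "\<forall>E. is_graph n E \<and> card E = m \<longrightarrow> good_partition n d E {}"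
  shows "partition_algorithm n m d 0"
  unfolding partition_algorithm_def
proof (intro exI conjI)
  let ?s = "(base_pair, False, 0::nat)"
  show s: "?s \<in> qbasis n 1" unfolding qbasis_def using base_pair_in_vpairs[OF assms(1)] by simp
  show "\<forall>U\<in>set [cmat id_mat]. unitary_on (qbasis n 1) U"
    using orthogonal_imp_unitary_mat[OF orthogonal_id_mat[OF finite_qbasis]]
    by (simp add: unitary_on_def unitary_mat_on_def)
  have "out_prob (qbasis n 1) E [cmat id_mat] ?s (\<lambda>_. {}) (good_partition n d E) = 1"
    if "is_graph n E \<and> card E = m" for E
  proof -
    have "out_prob (qbasis n 1) E [cmat id_mat] ?s (\<lambda>_. {}) (good_partition n d E) =
        (\<Sum>j\<in>qbasis n 1. if j = ?s then 1 else 0)"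
      unfolding out_prob_def run.simps app_ket[OF s finite_qbasis] using assms(2) that
      by (intro sum.cong) (auto simp: cmat_def id_mat_def)
    then show ?thesis using s finite_qbasis by simp
  qed
  then show "\<forall>E. is_graph n E \<and> card E = m \<longrightarrow>
      1 - 1 / real n \<le> out_prob (qbasis n 1) E [cmat id_mat] ?s (\<lambda>_. {}) (good_partition n d E)"
    by simp
qed (simp_all)

lemma ln_ge_half: "2 \<le> n \<Longrightarrow> 1/2 \<le> ln (real n)"
proof -
  assume n: "2 \<le> n"
  have "exp (1/2::real) \<le> 2" using exp_le_inverse_one_minus[of "1/2"] by simp
  also have "\<dots> \<le> real n" using n by simp
  finally show ?thesis using n by (subst ln_ge_iff) auto
qed

lemma sampler_query_bound:
  fixes L D :: real and n m N R t :: nat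
  assumes "real t \<le> pi / 4 * sqrt (real N / real m)" "N \<le> n * n" "m \<le> N" "0 < m"
    and "1/2 \<le> L" "0 < D" "D \<le> real m" "real R \<le> 3360 * L * real m / D + 1"
  shows "real R * (real t + 2) \<le> 10086 * L * (real n / D) * sqrt (real m)"
proof -
  define z where "z = sqrt (real m)"
  define y where "y = real n / z"
  have z0: "0 < z" and zz: "z * z = real m" unfolding z_def using assms(4) by simp_all
  have "sqrt (real N / real m) \<le> y"
  proof -
    have "sqrt (real N / real m) \<le> sqrt (real n * real n / real m)"
      using assms(2,4) by (intro real_sqrt_le_mono divide_right_mono) (simp_all flip: of_nat_mult)
    also have "\<dots> = y" unfolding y_def z_def by (simp add: real_sqrt_divide)
    finally show ?thesis .
  qed
  moreover have "1 \<le> sqrt (real N / real m)" using assms(3,4) by simp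
  ultimately have y1: "1 \<le> y" and ty: "real t + 2 \<le> 3 * y"
    using assms(1) pi_less_4 mult_right_mono[of "pi / 4" 1 "sqrt (real N / real m)"] by linarith+
  define K where "K = L * y * (z * z) / D"
  have "D \<le> 2 * L * real m" using assms(5,7) mult_right_mono[of 1 "2 * L" "real m"] by simp
  then have "1 \<le> 2 * L * (z * z / D)" using assms(6) zz by (simp add: field_simps)
  then have "3 * y * 1 \<le> 3 * y * (2 * L * (z * z / D))" using y1 by (intro mult_left_mono) auto
  then have "3 * y \<le> 6 * K" unfolding K_def by (simp add: mult_ac)
  have "real R * (real t + 2) \<le> (3360 * L * (z * z) / D + 1) * (3 * y)"
    using assms(8) ty zz y1 assms(5,6) by (intro mult_mono) auto
  also have "\<dots> = 10080 * K + 3 * y" unfolding K_def by (simp add: algebra_simps)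
  also have "\<dots> \<le> 10086 * K" using \<open>3 * y \<le> 6 * K\<close> by simp
  also have "K = L * (real n / D) * z" unfolding K_def y_def using z0 by simp
  finally show ?thesis unfolding z_def by (simp add: mult_ac)
qed

lemma threshold_lower_bound:
  fixes L D \<alpha> :: real and m R :: nat
  assumes "3360 * L * real m / D \<le> real R" "1 / (4 * real m) \<le> \<alpha>" "0 \<le> L" "0 < D" "0 < m"
  shows "840 * L \<le> real R * \<alpha> * D"
proof -
  have "(3360 * L * real m / D) * (1 / (4 * real m)) \<le> real R * \<alpha>"
    using assms by (intro mult_mono) auto
  then have "(3360 * L * real m / D) * (1 / (4 * real m)) * D \<le> real R * \<alpha> * D"
    using assms(4) by (intro mult_right_mono) auto
  then show ?thesis using assms(4,5) by (simp add: field_simps)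
qed

lemma sampling_partition_algorithm:
  assumes n2: "2 \<le> n" and mD: "11/10 * real n powr d < real m" and mN: "m \<le> card (vpairs n)"
  shows "partition_algorithm n m d (10086 * ln (real n) * real n powr (1 - d) * sqrt (real m))"
proof -
  define N where "N = card (vpairs n)"
  define D where "D = real n powr d"
  define L where "L = ln (real n)"
  have Dpos: "0 < D" unfolding D_def using n2 by simp
  have mpos: "0 < m" using mD Dpos unfolding D_def by (cases m) auto
  interpret g: grover N m by unfold_locales (use mpos mN in \<open>auto simp: N_def\<close>)
  define t where "t = g.steps"
  define R where "R = nat \<lceil>3360 * L * real m / D\<rceil>"
  have L2: "1/2 \<le> L" unfolding L_def using ln_ge_half[OF n2] .
  have Rlo: "3360 * L * real m / D \<le> real R" unfolding R_def by linarith
  have "0 \<le> 3360 * L * real m / D" using L2 Dpos by simp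
  then have Rhi: "real R \<le> 3360 * L * real m / D + 1" unfolding R_def by linarith
  have "840 * L \<le> real R * (fst (g.amps t))\<^sup>2 * D"
    using threshold_lower_bound[OF Rlo g.amps_steps_lower_bound[folded t_def]] L2 Dpos mpos by simp
  then have success: "1 - 1 / real n \<le> out_prob (qbasis n (workspace_size n R)) E (sampler n R t) start_idx
      (sampler_out n (real R * (fst (g.amps t))\<^sup>2 * D)) (good_partition n d E)"
    if "is_graph n E \<and> card E = m" for E
  proof -
    interpret grover_graph N m n E
      by unfold_locales (use that in \<open>auto simp: is_graph_def N_def\<close>)
    show ?thesis
      unfolding out_prob_sampler[OF n2] cmod_seq_amp_sq D_def
      using prob_good_partition[OF n2] \<open>840 * L \<le> _\<close> unfolding L_def D_def by blast
  qed
  have "D \<le> real m" using mD Dpos unfolding D_def by simp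
  then have "real (length (sampler n R t) - 1) \<le> 10086 * L * (real n / D) * sqrt (real m)"
    unfolding length_sampler t_def
    using sampler_query_bound[OF g.steps_le card_vpairs_le[of n, folded N_def] mN[folded N_def] mpos L2 Dpos _ Rhi]
    by (simp add: algebra_simps)
  moreover have "real n / D = real n powr (1 - d)" unfolding D_def using n2 by (simp add: powr_diff)
  ultimately show ?thesis
    unfolding partition_algorithm_def L_def
    using workspace_size_pos start_idx_in_qbasis[OF n2] sampler_unitary[OF n2] success
    by (intro exI[of _ "workspace_size n R"] exI[of _ "sampler n R t"] exI[of _ start_idx]
        exI[of _ "sampler_out n (real R * (fst (g.amps t))\<^sup>2 * D)"]) (auto simp: sampler_def)
qed

lemma partition_algorithm_exists:
  assumes "2 \<le> n"
  shows "partition_algorithm n m d (10086 * ln (real n) * real n powr (1 - d) * sqrt (real m))"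
proof (cases "real m \<le> 11/10 * real n powr d \<or> card (vpairs n) < m")
  case True
  have "good_partition n d E {}" if E: "is_graph n E \<and> card E = m" for E
  proof -
    have "card E \<le> card (vpairs n)" using E finite_vpairs card_mono unfolding is_graph_def by blast
    then have "real (deg E v) \<le> 11/10 * real n powr d" for v
      using True E deg_le_card[of E n v] unfolding is_graph_def by fastforce
    then show ?thesis unfolding good_partition_def low_set_def by auto
  qed
  then show ?thesis
    using assms by (intro partition_algorithm_mono[OF trivial_partition_algorithm]) auto
next
  case False
  then show ?thesis by (intro sampling_partition_algorithm assms) auto
qed

theorem proposition1:
  fixes d :: real
  assumes "0 \<le> d" and "d \<le> 1"
  shows "\<exists>(C::real) (k::nat). C > 0 \<and>
    (\<forall>n::nat. n \<ge> 2 \<longrightarrow> (\<forall>m::nat.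
      \<exists>(W::nat) (Us::qmat list) (s0::idx) (out::idx \<Rightarrow> nat set).
        W > 0 \<and> Us \<noteq> [] \<and> s0 \<in> qbasis n W \<and>
        (\<forall>U\<in>set Us. unitary_on (qbasis n W) U) \<and>
        real (length Us - 1) \<le> C * (ln (real n)) ^ k * real n powr (1 - d) * sqrt (real m) \<and>
        (\<forall>E. is_graph n E \<and> card E = m \<longrightarrow>
           out_prob (qbasis n W) E Us s0 out (good_partition n d E) \<ge> 1 - 1 / real n)))"
  using partition_algorithm_exists
  unfolding partition_algorithm_def by (intro exI[of _ 10086] exI[of _ 1]) simp

end
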